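(* Let $\mathfrak g$ be a finite-dimensional simple complex Lie algebra of classical type and $\mathfrak a\subseteq\mathfrak g$ a semisimple Levi subalgebra whose simple roots are simple roots of $\mathfrak g$. Let $W$ be a finite-dimensional $\mathfrak g\otimes\mathbb C[t]$-module and $w\in W$ a weight vector of weight $\lambda$ (for $\mathfrak h=\mathfrak h\otimes1$) such that $U(\mathfrak n^-\otimes\mathbb C[t]).w=W$. Then $$U(\mathfrak a\otimes\mathbb C[t]).w=\sum_{\mu\in Q^+_{\mathfrak a}}W_{\lambda-\mu},$$ where $W_\nu$ denotes the $\nu$-weight space of $W$.
   Context: $\mathfrak g$ is a finite-dimensional simple complex Lie algebra of classical type with triangular decomposition $\mathfrak g=\mathfrak n^+\oplus\mathfrak h\oplus\mathfrak n^-$, roots $R$, simple roots $\Pi$. A Levi subalgebra is, for $R'\subseteq R$ closed under addition (within $R$) and under $\alpha\mapsto-\alpha$, $\mathfrak a=\sum_{\alpha\in R'}[\mathfrak g_\alpha,\mathfrak g_{-\alpha}]\oplus\bigoplus_{\alpha\in R'}\mathfrak g_\alpha$, with induced triangular decomposition $\mathfrak n^\pm_{\mathfrak a}\subseteq\mathfrak n^\pm$, $\mathfrak h_{\mathfrak a}\subseteq\mathfrak h$, positive roots $R^+_{\mathfrak a}=R'\cap R^+$ and simple roots $\Pi_{\mathfrak a}$; here $\Pi_{\mathfrak a}\subseteq\Pi$ is assumed. $Q^+_{\mathfrak a}$ is the $\mathbb Z_{\ge0}$-span of $R^+_{\mathfrak a}$. The current algebra $\mathfrak g\otimes\mathbb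 C[t]$ has bracket $[x\otimes p,y\otimes q]=[x,y]\otimes pq$. *)

theory Defs
  imports "Jordan_Normal_Form.Matrix"
begin

definition mtrace :: "complex mat \<Rightarrow> complex" where
  "mtrace X = (\<Sum>i<dim_row X. X $$ (i,i))"

definition lie_br :: "complex mat \<Rightarrow> complex mat \<Rightarrow> complex mat" where
  "lie_br X Y = X * Y - Y * X"

definition J_orth :: "nat \<Rightarrow> complex mat" where
  "J_orth N = mat N N (\<lambda>(i,j). if i + j = N - 1 then 1 else 0)"

definition J_symp :: "nat \<Rightarrow> complex mat" where
  "J_symp n = mat (2*n) (2*n) (\<lambda>(i,j). if i + j = 2*n - 1 then (if i < n then 1 else -1) else 0)"

definition sl_alg :: "nat \<Rightarrow> complex mat set" where
  "sl_alg N = {X \<in> carrier_mat N N. mtrace X = 0}"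

definition so_alg :: "nat \<Rightarrow> complex mat set" where
  "so_alg N = {X \<in> carrier_mat N N. X\<^sup>T * J_orth N + J_orth N * X = 0\<^sub>m N N}"

definition sp_alg :: "nat \<Rightarrow> complex mat set" where
  "sp_alg n = {X \<in> carrier_mat (2*n) (2*n). X\<^sup>T * J_symp n + J_symp n * X = 0\<^sub>m (2*n) (2*n)}"

text \<open>g is a simple Lie algebra of classical type (A, B, C or D), realised in its standard
  form inside gl_N, so that the standard triangular decomposition is given by
  diagonal / strictly upper / strictly lower triangular matrices.\<close>
definition classical_simple :: "nat \<Rightarrow> complex mat set \<Rightarrow> bool" where
  "classical_simple N g \<longleftrightarrow>
     (N \<ge> 2 \<and> g = sl_alg N)
   \<or> ((N = 3 \<or> N \<ge> 5) \<and> g = so_alg N)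
   \<or> (\<exists>n\<ge>1. N = 2*n \<and> g = sp_alg n)"

definition cartan :: "nat \<Rightarrow> complex mat set \<Rightarrow> complex mat set" where
  "cartan N g = {X \<in> g. \<forall>i<N. \<forall>j<N. i \<noteq> j \<longrightarrow> X $$ (i,j) = 0}"

definition npos :: "nat \<Rightarrow> complex mat set \<Rightarrow> complex mat set" where
  "npos N g = {X \<in> g. \<forall>i<N. \<forall>j<N. j \<le> i \<longrightarrow> X $$ (i,j) = 0}"

definition nneg :: "nat \<Rightarrow> complex mat set \<Rightarrow> complex mat set" where
  "nneg N g = {X \<in> g. \<forall>i<N. \<forall>j<N. i \<le> j \<longrightarrow> X $$ (i,j) = 0}"

text \<open>Functionals on h are represented by functions on matrices; only their values on h matter.\<close>

definition root_space :: "nat \<Rightarrow> complex mat set \<Rightarrow> (complex mat \<Rightarrow> complex) \<Rightarrow> complex mat set" where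
  "root_space N g \<alpha> = {X \<in> g. \<forall>H \<in> cartan N g. lie_br H X = \<alpha> H \<cdot>\<^sub>m X}"

definition is_root :: "nat \<Rightarrow> complex mat set \<Rightarrow> (complex mat \<Rightarrow> complex) \<Rightarrow> bool" where
  "is_root N g \<alpha> \<longleftrightarrow> (\<exists>H \<in> cartan N g. \<alpha> H \<noteq> 0) \<and> (\<exists>X \<in> root_space N g \<alpha>. X \<noteq> 0\<^sub>m N N)"

definition pos_root :: "nat \<Rightarrow> complex mat set \<Rightarrow> (complex mat \<Rightarrow> complex) \<Rightarrow> bool" where
  "pos_root N g \<alpha> \<longleftrightarrow> is_root N g \<alpha> \<and> (\<exists>X \<in> root_space N g \<alpha>. X \<noteq> 0\<^sub>m N N \<and> X \<in> npos N g)"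

definition simple_roots :: "nat \<Rightarrow> complex mat set \<Rightarrow> ((complex mat \<Rightarrow> complex) \<Rightarrow> bool)
    \<Rightarrow> (complex mat \<Rightarrow> complex) \<Rightarrow> bool" where
  "simple_roots N g P \<alpha> \<longleftrightarrow> P \<alpha> \<and>
     \<not> (\<exists>\<beta> \<gamma>. P \<beta> \<and> P \<gamma> \<and> (\<forall>H \<in> cartan N g. \<alpha> H = \<beta> H + \<gamma> H))"

definition closed_root_subset :: "nat \<Rightarrow> complex mat set \<Rightarrow> (complex mat \<Rightarrow> complex) set \<Rightarrow> bool" where
  "closed_root_subset N g R' \<longleftrightarrow>
     (\<forall>\<alpha> \<in> R'. is_root N g \<alpha>)
   \<and> (\<forall>\<alpha> \<in> R'. \<forall>\<beta> \<in> R'. is_root N g (\<lambda>H. \<alpha> H + \<beta> H) \<longrightarrow> (\<lambda>H. \<alpha> H + \<beta> H) \<in> R')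
   \<and> (\<forall>\<alpha> \<in> R'. (\<lambda>H. - \<alpha> H) \<in> R')"

inductive_set mat_span :: "nat \<Rightarrow> complex mat set \<Rightarrow> complex mat set" for N S where
  zero: "0\<^sub>m N N \<in> mat_span N S"
| base: "X \<in> S \<Longrightarrow> X \<in> mat_span N S"
| add: "X \<in> mat_span N S \<Longrightarrow> Y \<in> mat_span N S \<Longrightarrow> X + Y \<in> mat_span N S"
| smult: "X \<in> mat_span N S \<Longrightarrow> c \<cdot>\<^sub>m X \<in> mat_span N S"

definition levi :: "nat \<Rightarrow> complex mat set \<Rightarrow> (complex mat \<Rightarrow> complex) set \<Rightarrow> complex mat set" where
  "levi N g R' = mat_span N
     ({lie_br X Y | X Y \<alpha>. \<alpha> \<in> R' \<and> X \<in> root_space N g \<alpha> \<and> Y \<in> root_space N g (\<lambda>H. - \<alpha> H)}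
      \<union> (\<Union>\<alpha> \<in> R'. root_space N g \<alpha>))"

definition Qplus :: "nat \<Rightarrow> complex mat set \<Rightarrow> (complex mat \<Rightarrow> complex) set \<Rightarrow> (complex mat \<Rightarrow> complex) \<Rightarrow> bool" where
  "Qplus N g R' \<mu> \<longleftrightarrow> (\<exists>as. (\<forall>\<alpha> \<in> set as. \<alpha> \<in> R' \<and> pos_root N g \<alpha>) \<and>
       (\<forall>H \<in> cartan N g. \<mu> H = sum_list (map (\<lambda>\<alpha>. \<alpha> H) as)))"

text \<open>A representation of g \<otimes> C[t] on W = C^m, given on the basis-like elements x \<otimes> t^k:
  rho k X is the action of X \<otimes> t^k.\<close>
definition current_rep :: "nat \<Rightarrow> complex mat set \<Rightarrow> nat \<Rightarrow> (nat \<Rightarrow> complex mat \<Rightarrow> complex mat) \<Rightarrow> bool" where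
  "current_rep N g m \<rho> \<longleftrightarrow>
     (\<forall>k. \<forall>X \<in> g. \<rho> k X \<in> carrier_mat m m)
   \<and> (\<forall>k. \<forall>X \<in> g. \<forall>Y \<in> g. \<rho> k (X + Y) = \<rho> k X + \<rho> k Y)
   \<and> (\<forall>k c. \<forall>X \<in> g. \<rho> k (c \<cdot>\<^sub>m X) = c \<cdot>\<^sub>m \<rho> k X)
   \<and> (\<forall>k l. \<forall>X \<in> g. \<forall>Y \<in> g. \<rho> (k + l) (lie_br X Y) = lie_br (\<rho> k X) (\<rho> l Y))"

text \<open>U(L \<otimes> C[t]).w : the smallest subspace of C^m containing w and stable under all
  X \<otimes> t^k with X \<in> L (equivalently, the image of w under U(L \<otimes> C[t])).\<close>
inductive_set cyclic_sub :: "nat \<Rightarrow> (nat \<Rightarrow> complex mat \<Rightarrow> complex mat) \<Rightarrow> complex mat set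
    \<Rightarrow> complex vec \<Rightarrow> complex vec set" for m \<rho> L w where
  gen: "w \<in> cyclic_sub m \<rho> L w"
| zero: "0\<^sub>v m \<in> cyclic_sub m \<rho> L w"
| add: "u \<in> cyclic_sub m \<rho> L w \<Longrightarrow> v \<in> cyclic_sub m \<rho> L w \<Longrightarrow> u + v \<in> cyclic_sub m \<rho> L w"
| smult: "u \<in> cyclic_sub m \<rho> L w \<Longrightarrow> c \<cdot>\<^sub>v u \<in> cyclic_sub m \<rho> L w"
| act: "X \<in> L \<Longrightarrow> u \<in> cyclic_sub m \<rho> L w \<Longrightarrow> \<rho> k X *\<^sub>v u \<in> cyclic_sub m \<rho> L w"

definition weight_space :: "nat \<Rightarrow> complex mat set \<Rightarrow> nat \<Rightarrow> (nat \<Rightarrow> complex mat \<Rightarrow> complex mat)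
    \<Rightarrow> (complex mat \<Rightarrow> complex) \<Rightarrow> complex vec set" where
  "weight_space N g m \<rho> \<nu> = {v \<in> carrier_vec m. \<forall>H \<in> cartan N g. \<rho> 0 H *\<^sub>v v = \<nu> H \<cdot>\<^sub>v v}"

inductive_set vec_sum_span :: "nat \<Rightarrow> complex vec set \<Rightarrow> complex vec set" for m S where
  zero: "0\<^sub>v m \<in> vec_sum_span m S"
| base: "v \<in> S \<Longrightarrow> v \<in> vec_sum_span m S"
| add: "u \<in> vec_sum_span m S \<Longrightarrow> v \<in> vec_sum_span m S \<Longrightarrow> u + v \<in> vec_sum_span m S"

end

theory Submission
  imports Defs
begin

text \<open>Let \<open>S\<close> be the sum of the weight spaces \<open>W\<^bsub>\<lambda>-\<mu>\<^esub>\<close>, \<open>\<mu> \<in> Q\<^sup>+\<^sub>\<aa>\<close>.  A PBW argument shows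
  \<open>U(\<aa> \<otimes> \<complex>[t]).w = U(\<nn>\<^sup>-\<^sub>\<aa> \<otimes> \<complex>[t]).w\<close>: raising root vectors and \<open>\<hh> \<otimes> t\<^sup>k\<close> cannot raise the
  weight of \<open>w\<close>, because every weight of \<open>W = U(\<nn>\<^sup>- \<otimes> \<complex>[t]).w\<close> lies below \<open>\<lambda>\<close>, and commutators of
  root vectors of \<open>\<aa>\<close> stay in \<open>\<aa>\<close>.  Hence \<open>U(\<aa> \<otimes> \<complex>[t]).w \<subseteq> S\<close>.  Conversely, let
  \<open>H\<^sub>\<aa> \<in> \<hh>\<close> vanish on the simple roots of \<open>\<aa>\<close> and take the value 1 on the other simple roots of
  \<open>\<gg>\<close>.  Because the simple roots of \<open>\<aa>\<close> are simple in \<open>\<gg>\<close>, a positive root vanishes on \<open>H\<^sub>\<aa>\<close>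
  exactly when it is a root of \<open>\<aa>\<close>.  Now \<open>W\<close> is spanned by monomials in lowering root vectors applied
  to \<open>w\<close>, and a vector of \<open>S\<close> is an \<open>H\<^sub>\<aa>\<close>-eigenvector with eigenvalue \<open>\<lambda>(H\<^sub>\<aa>)\<close>; so it is a
  combination of monomials all of whose factors have \<open>H\<^sub>\<aa>\<close>-degree zero, i.e. lie in \<open>\<aa>\<close>.  Hence
  \<open>S \<subseteq> U(\<aa> \<otimes> \<complex>[t]).w\<close>.\<close>

section \<open>Matrices, spans and eigenvectors\<close>

lemma index_mult_mat_sum:
  assumes "A \<in> carrier_mat nr n" "B \<in> carrier_mat n nc" "i < nr" "j < nc"
  shows "(A * B) $$ (i,j) = (\<Sum>k<n. A $$ (i,k) * B $$ (k,j))"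
  using assms by (auto simp: scalar_prod_def lessThan_atLeast0 intro!: sum.cong)

lemma mult_diag_mat_entry:
  assumes H: "H \<in> carrier_mat N N" "\<forall>i<N. \<forall>j<N. i \<noteq> j \<longrightarrow> H $$ (i,j) = 0"
    and X: "X \<in> carrier_mat N N" and ij: "i < N" "j < N"
  shows "(H * X) $$ (i,j) = H $$ (i,i) * X $$ (i,j)"
    and "(X * H) $$ (i,j) = X $$ (i,j) * H $$ (j,j)"
proof -
  have "(H * X) $$ (i,j) = (\<Sum>k<N. if k = i then H $$ (i,i) * X $$ (i,j) else 0)"
    unfolding index_mult_mat_sum[OF H(1) X ij] by (rule sum.cong) (use H ij in auto)
  then show "(H * X) $$ (i,j) = H $$ (i,i) * X $$ (i,j)" using ij by simp
  have "(X * H) $$ (i,j) = (\<Sum>k<N. if k = j then X $$ (i,j) * H $$ (j,j) else 0)"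
    unfolding index_mult_mat_sum[OF X H(1) ij] by (rule sum.cong) (use H ij in auto)
  then show "(X * H) $$ (i,j) = X $$ (i,j) * H $$ (j,j)" using ij by simp
qed

lemma lie_br_diag_left:
  assumes H: "H \<in> carrier_mat N N" "\<forall>i<N. \<forall>j<N. i \<noteq> j \<longrightarrow> H $$ (i,j) = 0"
    and X: "X \<in> carrier_mat N N"
  shows "lie_br H X = mat N N (\<lambda>(i,j). (H $$ (i,i) - H $$ (j,j)) * X $$ (i,j))"
  by (rule eq_matI)
    (use H X mult_diag_mat_entry[OF H X] in \<open>auto simp: lie_br_def algebra_simps\<close>)

lemma mult_mat_vec_zero: "A \<in> carrier_mat nr n \<Longrightarrow> A *\<^sub>v 0\<^sub>v n = 0\<^sub>v nr"
  by (intro eq_vecI) auto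

lemma smult_mult_mat_vec:
  assumes "A \<in> carrier_mat nr n" "v \<in> carrier_vec n"
  shows "(c \<cdot>\<^sub>m A) *\<^sub>v v = c \<cdot>\<^sub>v (A *\<^sub>v v)"
  using assms by (intro eq_vecI) (auto simp: scalar_prod_def sum_distrib_left algebra_simps)

inductive_set vec_span :: "nat \<Rightarrow> 'a::comm_ring_1 vec set \<Rightarrow> 'a vec set" for n S where
  zero: "0\<^sub>v n \<in> vec_span n S"
| base: "v \<in> S \<Longrightarrow> v \<in> vec_span n S"
| add: "u \<in> vec_span n S \<Longrightarrow> v \<in> vec_span n S \<Longrightarrow> u + v \<in> vec_span n S"
| smult: "u \<in> vec_span n S \<Longrightarrow> c \<cdot>\<^sub>v u \<in> vec_span n S"

lemma vec_span_carrier: "v \<in> vec_span n S \<Longrightarrow> S \<subseteq> carrier_vec n \<Longrightarrow> v \<in> carrier_vec n"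
  by (induction rule: vec_span.induct) auto

lemma vec_span_mono: "v \<in> vec_span n S \<Longrightarrow> S \<subseteq> T \<Longrightarrow> v \<in> vec_span n T"
  by (induction rule: vec_span.induct) (auto intro: vec_span.intros)

lemma vec_span_empty: "v \<in> vec_span n {} \<Longrightarrow> v = 0\<^sub>v n"
  by (induction rule: vec_span.induct) auto

lemma vec_span_finite_support:
  "v \<in> vec_span n S \<Longrightarrow> \<exists>F. finite F \<and> F \<subseteq> S \<and> v \<in> vec_span n F"
proof (induction rule: vec_span.induct)
  case (add u v)
  then obtain F G where "finite F" "F \<subseteq> S" "u \<in> vec_span n F" "finite G" "G \<subseteq> S" "v \<in> vec_span n G"
    by blast
  then show ?case by (intro exI[of _ "F \<union> G"]) (auto intro: vec_span.add vec_span_mono)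
qed (auto intro: vec_span.intros)

lemma vec_span_insert_decomp:
  assumes "v \<in> vec_span n (insert x S)" "S \<subseteq> carrier_vec n" "x \<in> carrier_vec n"
  shows "\<exists>a v'. v' \<in> vec_span n S \<and> v = a \<cdot>\<^sub>v x + v'"
  using assms
proof (induction rule: vec_span.induct)
  case zero
  show ?case by (intro exI[of _ 0] exI[of _ "0\<^sub>v n"]) (use zero in \<open>auto intro: vec_span.zero\<close>)
next
  case (base v)
  show ?case
  proof (cases "v = x")
    case True
    then show ?thesis using base by (intro exI[of _ 1] exI[of _ "0\<^sub>v n"]) (auto intro: vec_span.zero)
  next
    case False
    then show ?thesis using base
      by (intro exI[of _ 0] exI[of _ v]) (auto intro: vec_span.base intro!: eq_vecI)
  qed
next
  case (add u v)
  then obtain a u' b v' where uv: "u' \<in> vec_span n S" "u = a \<cdot>\<^sub>v x + u'" "v' \<in> vec_span n S" "v = b \<cdot>\<^sub>v x + v'"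
    by blast
  have "u' \<in> carrier_vec n" "v' \<in> carrier_vec n" using uv add.prems vec_span_carrier by blast+
  then have "u + v = (a + b) \<cdot>\<^sub>v x + (u' + v')"
    using uv(2,4) add.prems by (auto intro!: eq_vecI simp: algebra_simps)
  then show ?case using uv by (blast intro: vec_span.add)
next
  case (smult u c)
  then obtain a u' where u: "u' \<in> vec_span n S" "u = a \<cdot>\<^sub>v x + u'" by blast
  have "u' \<in> carrier_vec n" using u smult.prems vec_span_carrier by blast
  then have "c \<cdot>\<^sub>v u = (c * a) \<cdot>\<^sub>v x + c \<cdot>\<^sub>v u'"
    using u(2) smult.prems by (auto intro!: eq_vecI simp: algebra_simps)
  then show ?case using u by (blast intro: vec_span.smult)
qed

lemma vec_span_eigen_shift:
  assumes A: "A \<in> carrier_mat n n"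
    and eig: "\<And>i. i \<in> I \<Longrightarrow> u i \<in> carrier_vec n \<and> A *\<^sub>v u i = ev i \<cdot>\<^sub>v u i"
    and v: "v \<in> vec_span n (u ` I)"
  shows "A *\<^sub>v v - c \<cdot>\<^sub>v v \<in> vec_span n (u ` I)"
  using v
proof (induction rule: vec_span.induct)
  case zero
  have "A *\<^sub>v 0\<^sub>v n - c \<cdot>\<^sub>v 0\<^sub>v n = 0\<^sub>v n" using A by (auto intro!: eq_vecI)
  then show ?case by (simp add: vec_span.zero)
next
  case (base v)
  then obtain i where i: "i \<in> I" "v = u i" by auto
  then have "A *\<^sub>v v - c \<cdot>\<^sub>v v = (ev i - c) \<cdot>\<^sub>v v"
    using eig[OF i(1)] by (auto intro!: eq_vecI simp: algebra_simps)
  then show ?case using base by (auto intro: vec_span.intros)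
next
  case (add v v')
  have "u ` I \<subseteq> carrier_vec n" using eig by auto
  then have C: "v \<in> carrier_vec n" "v' \<in> carrier_vec n" using add.hyps vec_span_carrier by blast+
  have "A *\<^sub>v (v + v') - c \<cdot>\<^sub>v (v + v') = (A *\<^sub>v v - c \<cdot>\<^sub>v v) + (A *\<^sub>v v' - c \<cdot>\<^sub>v v')"
    using C A by (auto intro!: eq_vecI simp: mult_add_distrib_mat_vec algebra_simps)
  then show ?case using add.IH by (simp add: vec_span.add)
next
  case (smult v a)
  have "u ` I \<subseteq> carrier_vec n" using eig by auto
  then have C: "v \<in> carrier_vec n" using smult.hyps vec_span_carrier by blast
  have "A *\<^sub>v (a \<cdot>\<^sub>v v) - c \<cdot>\<^sub>v (a \<cdot>\<^sub>v v) = a \<cdot>\<^sub>v (A *\<^sub>v v - c \<cdot>\<^sub>v v)"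
    using C A by (auto intro!: eq_vecI simp: mult_mat_vec algebra_simps)
  then show ?case using smult.IH by (simp add: vec_span.smult)
qed

lemma eigen_combination_shift:
  fixes A :: "'a::field mat"
  assumes A: "A \<in> carrier_mat n n" and u: "u \<in> carrier_vec n" "A *\<^sub>v u = c \<cdot>\<^sub>v u"
    and v: "v \<in> carrier_vec n" and e: "A *\<^sub>v (a \<cdot>\<^sub>v u + v) = e \<cdot>\<^sub>v (a \<cdot>\<^sub>v u + v)"
  shows "A *\<^sub>v v - c \<cdot>\<^sub>v v = (e - c) \<cdot>\<^sub>v (a \<cdot>\<^sub>v u + v)"
    and "c = e \<Longrightarrow> A *\<^sub>v v = e \<cdot>\<^sub>v v"
proof -
  have Av: "a \<cdot>\<^sub>v (c \<cdot>\<^sub>v u) + A *\<^sub>v v = e \<cdot>\<^sub>v (a \<cdot>\<^sub>v u + v)"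
    using e u v A by (simp add: mult_add_distrib_mat_vec mult_mat_vec)
  have "a * (c * u $ k) + (A *\<^sub>v v) $ k = e * (a * u $ k + v $ k)" if k: "k < n" for k
    using arg_cong[OF Av, of "\<lambda>x. x $ k"] k u v A by simp
  then show "A *\<^sub>v v - c \<cdot>\<^sub>v v = (e - c) \<cdot>\<^sub>v (a \<cdot>\<^sub>v u + v)"
    and "c = e \<Longrightarrow> A *\<^sub>v v = e \<cdot>\<^sub>v v"
    using A u v by (auto intro!: eq_vecI simp: algebra_simps)
qed

lemma eigenvector_in_eigen_span_finite:
  fixes A :: "'a::field mat"
  assumes A: "A \<in> carrier_mat n n" and "finite I"
    and eig: "\<And>i. i \<in> I \<Longrightarrow> u i \<in> carrier_vec n \<and> A *\<^sub>v u i = ev i \<cdot>\<^sub>v u i"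
    and "v \<in> vec_span n (u ` I)" and "A *\<^sub>v v = e \<cdot>\<^sub>v v"
  shows "v \<in> vec_span n (u ` {i \<in> I. ev i = e})"
  using \<open>finite I\<close> eig \<open>v \<in> vec_span n (u ` I)\<close> \<open>A *\<^sub>v v = e \<cdot>\<^sub>v v\<close>
proof (induction I arbitrary: v rule: finite_induct)
  case empty
  then show ?case using vec_span_empty by (auto intro: vec_span.zero)
next
  case (insert i I)
  have ui: "u i \<in> carrier_vec n" "A *\<^sub>v u i = ev i \<cdot>\<^sub>v u i" using insert.prems(1) by auto
  have uI: "u ` I \<subseteq> carrier_vec n" using insert.prems(1) by auto
  obtain a v' where v': "v' \<in> vec_span n (u ` I)" "v = a \<cdot>\<^sub>v u i + v'"
    using vec_span_insert_decomp[of v n "u i" "u ` I"] insert.prems(2) ui uI by auto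
  have v'C: "v' \<in> carrier_vec n" using vec_span_carrier[OF v'(1) uI] .
  have vC: "v \<in> carrier_vec n" using v'(2) v'C ui by simp
  note shift = eigen_combination_shift[OF A ui v'C insert.prems(3)[unfolded v'(2)], folded v'(2)]
  have mono: "vec_span n (u ` {j \<in> I. ev j = e}) \<subseteq> vec_span n (u ` {j \<in> insert i I. ev j = e})"
    by (auto intro: vec_span_mono)
  show ?case
  proof (cases "ev i = e")
    case True
    then have "v' \<in> vec_span n (u ` {j \<in> insert i I. ev j = e})"
      using shift(2) insert.IH[OF _ v'(1)] insert.prems(1) mono by blast
    moreover have "u i \<in> u ` {j \<in> insert i I. ev j = e}" using True by blast
    ultimately show ?thesis using v'(2) by (blast intro: vec_span.intros)
  next
    case False
    text \<open>\<open>A - ev i\<close> kills the \<open>u i\<close>-component and rescales \<open>v\<close>.\<close>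
    let ?w = "A *\<^sub>v v' - ev i \<cdot>\<^sub>v v'"
    have "?w \<in> vec_span n (u ` I)"
      using vec_span_eigen_shift[OF A _ v'(1)] insert.prems(1) by blast
    moreover have "A *\<^sub>v ?w = e \<cdot>\<^sub>v ?w"
      unfolding shift(1) using vC A insert.prems(3) by (simp add: mult_mat_vec smult_smult_assoc mult.commute)
    ultimately have "?w \<in> vec_span n (u ` {j \<in> insert i I. ev j = e})"
      using insert.IH insert.prems(1) mono by blast
    moreover have "v = inverse (e - ev i) \<cdot>\<^sub>v ?w"
      unfolding shift(1) using False vC by (auto intro!: eq_vecI)
    ultimately show ?thesis by (metis vec_span.smult)
  qed
qed

lemma eigenvector_in_eigen_span:
  fixes A :: "'a::field mat"
  assumes A: "A \<in> carrier_mat n n"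
    and eig: "\<And>i. i \<in> I \<Longrightarrow> u i \<in> carrier_vec n \<and> A *\<^sub>v u i = ev i \<cdot>\<^sub>v u i"
    and v: "v \<in> vec_span n (u ` I)" and e: "A *\<^sub>v v = e \<cdot>\<^sub>v v"
  shows "v \<in> vec_span n (u ` {i \<in> I. ev i = e})"
proof -
  obtain G where G: "finite G" "G \<subseteq> u ` I" "v \<in> vec_span n G"
    using vec_span_finite_support[OF v] by blast
  obtain F where F: "F \<subseteq> I" "finite F" "G = u ` F"
    using G(1,2) by (meson finite_subset_image)
  have "v \<in> vec_span n (u ` {i \<in> F. ev i = e})"
    using eigenvector_in_eigen_span_finite[OF A F(2) _ _ e] eig F(1) G(3) F(3) by blast
  then show ?thesis by (rule vec_span_mono) (use F in auto)
qed

section \<open>Matrix Lie algebras in standard form\<close>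

definition upper_part :: "nat \<Rightarrow> complex mat \<Rightarrow> complex mat" where
  "upper_part N X = mat N N (\<lambda>(i,j). if i < j then X $$ (i,j) else 0)"

definition lower_part :: "nat \<Rightarrow> complex mat \<Rightarrow> complex mat" where
  "lower_part N X = mat N N (\<lambda>(i,j). if j < i then X $$ (i,j) else 0)"

definition diag_part :: "nat \<Rightarrow> complex mat \<Rightarrow> complex mat" where
  "diag_part N X = mat N N (\<lambda>(i,j). if i = j then X $$ (i,j) else 0)"

definition eps_diff :: "nat \<Rightarrow> nat \<Rightarrow> complex mat \<Rightarrow> complex" where
  "eps_diff a b H = H $$ (a,a) - H $$ (b,b)"

text \<open>The traceless diagonal matrix on which \<open>\<epsilon>\<^sub>a - \<epsilon>\<^sub>b\<close> takes the value \<open>b - a\<close>; on a positive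
  root it measures the height.\<close>
definition height_elem :: "nat \<Rightarrow> complex mat" where
  "height_elem N = mat N N (\<lambda>(i,j). if i = j then (of_nat N - 1) / 2 - of_nat i else 0)"

definition agree_on_cartan ::
    "nat \<Rightarrow> complex mat set \<Rightarrow> (complex mat \<Rightarrow> complex) \<Rightarrow> (complex mat \<Rightarrow> complex) \<Rightarrow> bool" where
  "agree_on_cartan N g \<alpha> \<beta> \<longleftrightarrow> (\<forall>H \<in> cartan N g. \<alpha> H = \<beta> H)"

definition pos_root_index :: "nat \<Rightarrow> complex mat set \<Rightarrow> nat \<Rightarrow> nat \<Rightarrow> bool" where
  "pos_root_index N g a b \<longleftrightarrow> a < b \<and> b < N \<and> (\<exists>X \<in> g. X $$ (a,b) \<noteq> 0)"

text \<open>The root spaces are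
  spanned by matrices whose nonzero entries sit at positions of a single root (\<open>root_component\<close>);
  \<open>simple_pos\<close> marks one position for each simple root; every positive root is simple or a positive
  root of smaller height plus a simple root (\<open>pos_root_index_decomp\<close>); and the simple roots are
  linearly independent on \<open>\<hh>\<close>, so any 0/1 values prescribed on them are attained
  (\<open>simple_coweight_exists\<close>).\<close>
locale std_matrix_lie_algebra =
  fixes N :: nat and g :: "complex mat set" and simple_pos :: "nat \<Rightarrow> nat \<Rightarrow> bool"
  assumes g_carrier: "g \<subseteq> carrier_mat N N"
    and g_zero: "0\<^sub>m N N \<in> g"
    and g_add: "X \<in> g \<Longrightarrow> Y \<in> g \<Longrightarrow> X + Y \<in> g"
    and g_smult: "X \<in> g \<Longrightarrow> c \<cdot>\<^sub>m X \<in> g"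
    and g_lie_br: "X \<in> g \<Longrightarrow> Y \<in> g \<Longrightarrow> lie_br X Y \<in> g"
    and g_transpose: "X \<in> g \<Longrightarrow> X\<^sup>T \<in> g"
    and g_upper_part: "X \<in> g \<Longrightarrow> upper_part N X \<in> g"
    and g_diag_part: "X \<in> g \<Longrightarrow> diag_part N X \<in> g"
    and height_elem_in_g: "height_elem N \<in> g"
    and root_component: "Y \<in> g \<Longrightarrow> a < N \<Longrightarrow> b < N \<Longrightarrow> a \<noteq> b \<Longrightarrow>
      \<exists>C \<in> g. C $$ (a,b) = Y $$ (a,b) \<and> (\<forall>i<N. \<forall>j<N. C $$ (i,j) = 0 \<or> C $$ (i,j) = Y $$ (i,j)) \<and>
        (\<forall>i<N. \<forall>j<N. C $$ (i,j) \<noteq> 0 \<longrightarrow> agree_on_cartan N g (eps_diff i j) (eps_diff a b))"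
    and simple_pos_root_index: "simple_pos a b \<Longrightarrow> pos_root_index N g a b"
    and pos_root_index_decomp: "pos_root_index N g a b \<Longrightarrow> simple_pos a b \<or>
      (\<exists>c d e f. pos_root_index N g c d \<and> simple_pos e f \<and> d - c < b - a \<and>
         agree_on_cartan N g (eps_diff a b) (\<lambda>H. eps_diff c d H + eps_diff e f H))"
    and simple_coweight_exists: "(\<And>a b c d. simple_pos a b \<Longrightarrow> simple_pos c d \<Longrightarrow>
        agree_on_cartan N g (eps_diff a b) (eps_diff c d) \<Longrightarrow> P a b = P c d) \<Longrightarrow>
      \<exists>H \<in> cartan N g. \<forall>a b. simple_pos a b \<longrightarrow> eps_diff a b H = (if P a b then 0 else 1)"
begin

lemma g_carrier_mat: "X \<in> g \<Longrightarrow> X \<in> carrier_mat N N"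
  using g_carrier by auto

lemma cartan_in_g: "H \<in> cartan N g \<Longrightarrow> H \<in> g"
  by (auto simp: cartan_def)

lemma cartan_off_diag: "H \<in> cartan N g \<Longrightarrow> i < N \<Longrightarrow> j < N \<Longrightarrow> i \<noteq> j \<Longrightarrow> H $$ (i,j) = 0"
  by (auto simp: cartan_def)

lemma height_elem_cartan: "height_elem N \<in> cartan N g"
  using height_elem_in_g by (auto simp: cartan_def height_elem_def)

lemma eps_diff_height_elem: "i < N \<Longrightarrow> j < N \<Longrightarrow> eps_diff i j (height_elem N) = of_nat j - of_nat i"
  by (simp add: eps_diff_def height_elem_def)

lemma lie_br_cartan:
  "H \<in> cartan N g \<Longrightarrow> X \<in> carrier_mat N N \<Longrightarrow>
    lie_br H X = mat N N (\<lambda>(i,j). eps_diff i j H * X $$ (i,j))"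
  using lie_br_diag_left[of H N X] g_carrier_mat cartan_in_g cartan_off_diag
  unfolding eps_diff_def by blast

lemma root_space_iff: "X \<in> root_space N g \<alpha> \<longleftrightarrow> X \<in> g \<and>
    (\<forall>H \<in> cartan N g. \<forall>i<N. \<forall>j<N. eps_diff i j H * X $$ (i,j) = \<alpha> H * X $$ (i,j))"
proof -
  have "lie_br H X = \<alpha> H \<cdot>\<^sub>m X \<longleftrightarrow> (\<forall>i<N. \<forall>j<N. eps_diff i j H * X $$ (i,j) = \<alpha> H * X $$ (i,j))"
    if H: "H \<in> cartan N g" and X: "X \<in> g" for H X
  proof -
    have XC: "X \<in> carrier_mat N N" using g_carrier_mat X by auto
    have "mat N N (\<lambda>(i,j). eps_diff i j H * X $$ (i,j)) = \<alpha> H \<cdot>\<^sub>m X \<longleftrightarrow>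
        (\<forall>i<N. \<forall>j<N. eps_diff i j H * X $$ (i,j) = \<alpha> H * X $$ (i,j))"
      using XC by (auto simp: mat_eq_iff)
    then show ?thesis unfolding lie_br_cartan[OF H XC] .
  qed
  then show ?thesis unfolding root_space_def by blast
qed

lemma root_space_agree: "agree_on_cartan N g \<alpha> \<beta> \<Longrightarrow> root_space N g \<alpha> = root_space N g \<beta>"
  by (auto simp: root_space_iff agree_on_cartan_def)

lemma root_space_entry_agree:
  "X \<in> root_space N g \<alpha> \<Longrightarrow> i < N \<Longrightarrow> j < N \<Longrightarrow> X $$ (i,j) \<noteq> 0 \<Longrightarrow>
    agree_on_cartan N g (eps_diff i j) \<alpha>"
  unfolding root_space_iff agree_on_cartan_def by auto

lemma root_space_in_g: "X \<in> root_space N g \<alpha> \<Longrightarrow> X \<in> g"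
  by (auto simp: root_space_def)

lemma root_space_height_elem:
  assumes "X \<in> root_space N g \<alpha>" "i < N" "j < N" "X $$ (i,j) \<noteq> 0"
  shows "\<alpha> (height_elem N) = of_nat j - of_nat i"
  using root_space_entry_agree[OF assms] height_elem_cartan eps_diff_height_elem assms(2,3)
  by (auto simp: agree_on_cartan_def)

lemma g_lower_part: "X \<in> g \<Longrightarrow> lower_part N X \<in> g"
proof -
  assume X: "X \<in> g"
  have "lower_part N X = (upper_part N X\<^sup>T)\<^sup>T"
    using g_carrier_mat[OF X] by (auto simp: lower_part_def upper_part_def)
  then show ?thesis using X g_transpose g_upper_part by metis
qed

lemma triangular_parts_sum:
  "X \<in> carrier_mat N N \<Longrightarrow> X = upper_part N X + diag_part N X + lower_part N X"
  by (auto simp: upper_part_def lower_part_def diag_part_def)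

lemma upper_part_npos: "X \<in> g \<Longrightarrow> upper_part N X \<in> npos N g"
  using g_upper_part by (auto simp: npos_def upper_part_def)

lemma lower_part_nneg: "X \<in> g \<Longrightarrow> lower_part N X \<in> nneg N g"
  using g_lower_part by (auto simp: nneg_def lower_part_def)

lemma diag_part_cartan: "X \<in> g \<Longrightarrow> diag_part N X \<in> cartan N g"
  using g_diag_part by (auto simp: cartan_def diag_part_def)

lemma root_space_upper_part: "X \<in> root_space N g \<alpha> \<Longrightarrow> upper_part N X \<in> root_space N g \<alpha>"
  unfolding root_space_iff using g_upper_part by (auto simp: upper_part_def)

lemma root_space_lower_part: "X \<in> root_space N g \<alpha> \<Longrightarrow> lower_part N X \<in> root_space N g \<alpha>"
  unfolding root_space_iff using g_lower_part by (auto simp: lower_part_def)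

lemma cartan_root_space_zero: "Z \<in> cartan N g \<Longrightarrow> Z \<in> root_space N g (\<lambda>H. 0)"
  unfolding root_space_iff using cartan_in_g cartan_off_diag
  by (auto simp: eps_diff_def)

lemma lie_br_root_space:
  assumes X: "X \<in> root_space N g \<alpha>" and Y: "Y \<in> root_space N g \<beta>"
  shows "lie_br X Y \<in> root_space N g (\<lambda>H. \<alpha> H + \<beta> H)"
proof -
  have XC: "X \<in> carrier_mat N N" and YC: "Y \<in> carrier_mat N N"
    using g_carrier_mat root_space_in_g X Y by auto
  have Xe: "\<And>H i j. H \<in> cartan N g \<Longrightarrow> i < N \<Longrightarrow> j < N \<Longrightarrow>
      eps_diff i j H * X $$ (i,j) = \<alpha> H * X $$ (i,j)"
    using X unfolding root_space_iff by auto
  have Ye: "\<And>H i j. H \<in> cartan N g \<Longrightarrow> i < N \<Longrightarrow> j < N \<Longrightarrow>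
      eps_diff i j H * Y $$ (i,j) = \<beta> H * Y $$ (i,j)"
    using Y unfolding root_space_iff by auto
  have "eps_diff i j H * lie_br X Y $$ (i,j) = (\<alpha> H + \<beta> H) * lie_br X Y $$ (i,j)"
    if H: "H \<in> cartan N g" and ij: "i < N" "j < N" for H i j
  proof -
    have br: "lie_br X Y $$ (i,j) = (\<Sum>k<N. X $$ (i,k) * Y $$ (k,j) - Y $$ (i,k) * X $$ (k,j))"
      using XC YC ij
      by (simp add: lie_br_def index_mult_mat_sum[OF XC YC ij] index_mult_mat_sum[OF YC XC ij] sum_subtractf)
    text \<open>\<open>\<epsilon>\<^sub>i - \<epsilon>\<^sub>j = (\<epsilon>\<^sub>i - \<epsilon>\<^sub>k) + (\<epsilon>\<^sub>k - \<epsilon>\<^sub>j)\<close> splits each summand.\<close>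
    have split: "eps_diff i j H = eps_diff i k H + eps_diff k j H" for k
      by (simp add: eps_diff_def)
    have "eps_diff i j H * (X $$ (i,k) * Y $$ (k,j) - Y $$ (i,k) * X $$ (k,j))
        = (\<alpha> H + \<beta> H) * (X $$ (i,k) * Y $$ (k,j) - Y $$ (i,k) * X $$ (k,j))" if k: "k < N" for k
    proof -
      have "eps_diff i j H * (X $$ (i,k) * Y $$ (k,j)) =
          (eps_diff i k H * X $$ (i,k)) * Y $$ (k,j) + X $$ (i,k) * (eps_diff k j H * Y $$ (k,j))"
        "eps_diff i j H * (Y $$ (i,k) * X $$ (k,j)) =
          (eps_diff i k H * Y $$ (i,k)) * X $$ (k,j) + Y $$ (i,k) * (eps_diff k j H * X $$ (k,j))"
        unfolding split[of k] by (simp_all add: algebra_simps)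
      then show ?thesis
        unfolding Xe[OF H ij(1) k] Ye[OF H k ij(2)] Ye[OF H ij(1) k] Xe[OF H k ij(2)]
        by (simp add: algebra_simps)
    qed
    then show ?thesis unfolding br sum_distrib_left by (intro sum.cong) auto
  qed
  moreover have "lie_br X Y \<in> g" using g_lie_br root_space_in_g X Y by auto
  ultimately show ?thesis unfolding root_space_iff by auto
qed

lemma is_root_agree: "agree_on_cartan N g \<alpha> \<beta> \<Longrightarrow> is_root N g \<alpha> \<Longrightarrow> is_root N g \<beta>"
  unfolding is_root_def using root_space_agree[of \<alpha> \<beta>] by (auto simp: agree_on_cartan_def)

lemma pos_root_agree: "agree_on_cartan N g \<alpha> \<beta> \<Longrightarrow> pos_root N g \<alpha> \<Longrightarrow> pos_root N g \<beta>"
  unfolding pos_root_def using root_space_agree[of \<alpha> \<beta>] is_root_agree by auto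

lemma nonzero_mat_entry:
  assumes "Y \<in> carrier_mat N N" "Y \<noteq> 0\<^sub>m N N"
  shows "\<exists>i j. i < N \<and> j < N \<and> Y $$ (i,j) \<noteq> 0"
  using assms by (auto simp: mat_eq_iff)

lemma npos_nonzero_entry:
  assumes "X \<in> npos N g" "X \<noteq> 0\<^sub>m N N"
  shows "\<exists>a b. a < b \<and> b < N \<and> X $$ (a,b) \<noteq> 0"
  using nonzero_mat_entry[OF g_carrier_mat assms(2)] assms(1)
  by (auto simp: npos_def) (meson not_le)

lemma nneg_nonzero_entry:
  assumes "X \<in> nneg N g" "X \<noteq> 0\<^sub>m N N"
  shows "\<exists>a b. b < a \<and> a < N \<and> X $$ (a,b) \<noteq> 0"
  using nonzero_mat_entry[OF g_carrier_mat assms(2)] assms(1)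
  by (auto simp: nneg_def) (meson not_le)

lemma is_root_of_nonzero_entry:
  assumes "X \<in> root_space N g \<alpha>" "i < N" "j < N" "i \<noteq> j" "X $$ (i,j) \<noteq> 0"
  shows "is_root N g \<alpha>"
proof -
  have "\<alpha> (height_elem N) \<noteq> 0" using root_space_height_elem[of X \<alpha> i j] assms by auto
  moreover have "X \<noteq> 0\<^sub>m N N" using assms by auto
  ultimately show ?thesis unfolding is_root_def using assms(1) height_elem_cartan by blast
qed

lemma pos_root_index_of_pos_root:
  assumes "pos_root N g \<beta>"
  shows "\<exists>a b. pos_root_index N g a b \<and> agree_on_cartan N g (eps_diff a b) \<beta>"
proof -
  obtain X where X: "X \<in> root_space N g \<beta>" "X \<noteq> 0\<^sub>m N N" "X \<in> npos N g"
    using assms by (auto simp: pos_root_def)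
  obtain a b where ab: "a < b" "b < N" "X $$ (a,b) \<noteq> 0"
    using npos_nonzero_entry[OF X(3,2)] by auto
  have "pos_root_index N g a b"
    using ab root_space_in_g[OF X(1)] unfolding pos_root_index_def by blast
  moreover have "agree_on_cartan N g (eps_diff a b) \<beta>"
    using root_space_entry_agree[OF X(1)] ab by auto
  ultimately show ?thesis by blast
qed

lemma root_component_root_space:
  assumes "Y \<in> g" "a < N" "b < N" "a \<noteq> b"
  shows "\<exists>C \<in> root_space N g (eps_diff a b). C $$ (a,b) = Y $$ (a,b) \<and>
    (\<forall>i<N. \<forall>j<N. C $$ (i,j) = 0 \<or> C $$ (i,j) = Y $$ (i,j))"
proof -
  obtain C where C: "C \<in> g" "C $$ (a,b) = Y $$ (a,b)"
      "\<forall>i<N. \<forall>j<N. C $$ (i,j) = 0 \<or> C $$ (i,j) = Y $$ (i,j)"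
      "\<forall>i<N. \<forall>j<N. C $$ (i,j) \<noteq> 0 \<longrightarrow> agree_on_cartan N g (eps_diff i j) (eps_diff a b)"
    using root_component[OF assms] by blast
  have "C \<in> root_space N g (eps_diff a b)"
    unfolding root_space_iff using C(1,4) by (auto simp: agree_on_cartan_def)
  then show ?thesis using C(2,3) by blast
qed

lemma pos_root_of_index:
  assumes "pos_root_index N g a b"
  shows "pos_root N g (eps_diff a b)"
proof -
  obtain X where X: "X \<in> g" "X $$ (a,b) \<noteq> 0" and ab: "a < b" "b < N"
    using assms by (auto simp: pos_root_index_def)
  obtain C where C: "C \<in> root_space N g (eps_diff a b)" "C $$ (a,b) = upper_part N X $$ (a,b)"
      "\<forall>i<N. \<forall>j<N. C $$ (i,j) = 0 \<or> C $$ (i,j) = upper_part N X $$ (i,j)"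
    using root_component_root_space[OF g_upper_part[OF X(1)], of a b] ab by auto
  have Cab: "C $$ (a,b) \<noteq> 0" using C(2) X ab by (simp add: upper_part_def)
  have "C \<in> npos N g"
    using C(3) root_space_in_g[OF C(1)] by (fastforce simp: npos_def upper_part_def)
  moreover have "is_root N g (eps_diff a b)"
    using is_root_of_nonzero_entry[OF C(1) _ _ _ Cab] ab by simp
  moreover have "C \<noteq> 0\<^sub>m N N" using Cab ab by auto
  ultimately show ?thesis using C(1) unfolding pos_root_def by blast
qed

lemma eps_diff_height_elem_index:
  "pos_root_index N g a b \<Longrightarrow> eps_diff a b (height_elem N) = of_nat (b - a)"
  by (auto simp: pos_root_index_def eps_diff_height_elem of_nat_diff)

lemma lower_entry_pos_root_index:
  assumes "Y \<in> g" "b < a" "a < N" "Y $$ (a,b) \<noteq> 0"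
  shows "pos_root_index N g b a"
  using assms g_transpose[OF assms(1)] g_carrier_mat[OF assms(1)] unfolding pos_root_index_def
  by (intro conjI bexI[of _ "Y\<^sup>T"]) auto

end

section \<open>The grading defined by the Levi subalgebra\<close>

locale levi_data = std_matrix_lie_algebra +
  fixes R' :: "(complex mat \<Rightarrow> complex) set"
  assumes R': "closed_root_subset N g R'"
    and simple: "\<And>\<alpha>. simple_roots N g (\<lambda>\<beta>. \<beta> \<in> R' \<and> pos_root N g \<beta>) \<alpha>
      \<Longrightarrow> simple_roots N g (pos_root N g) \<alpha>"
begin

lemma R'_add:
  "\<alpha> \<in> R' \<Longrightarrow> \<beta> \<in> R' \<Longrightarrow> is_root N g (\<lambda>H. \<alpha> H + \<beta> H) \<Longrightarrow> (\<lambda>H. \<alpha> H + \<beta> H) \<in> R'"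
  using R' by (auto simp: closed_root_subset_def)

lemma R'_neg: "\<alpha> \<in> R' \<Longrightarrow> (\<lambda>H. - \<alpha> H) \<in> R'"
  using R' by (auto simp: closed_root_subset_def)

definition levi_pos :: "nat \<Rightarrow> nat \<Rightarrow> bool" where
  "levi_pos a b \<longleftrightarrow> (\<exists>\<rho> \<in> R'. agree_on_cartan N g \<rho> (eps_diff a b))"

text \<open>The grading of \<open>\<gg>\<close> whose degree-zero part is \<open>\<aa>\<close>: the coweight that vanishes on the simple
  roots of \<open>\<aa>\<close> and is 1 on all other simple roots.\<close>
definition levi_grading :: "complex mat" where
  "levi_grading = (SOME H. H \<in> cartan N g \<and>
     (\<forall>a b. simple_pos a b \<longrightarrow> eps_diff a b H = (if levi_pos a b then 0 else 1)))"

lemma levi_grading_cartan: "levi_grading \<in> cartan N g"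
  and eps_diff_levi_grading_simple:
    "simple_pos a b \<Longrightarrow> eps_diff a b levi_grading = (if levi_pos a b then 0 else 1)"
proof -
  have "\<exists>H \<in> cartan N g. \<forall>a b. simple_pos a b \<longrightarrow> eps_diff a b H = (if levi_pos a b then 0 else 1)"
    by (rule simple_coweight_exists) (auto simp: levi_pos_def agree_on_cartan_def)
  then have "levi_grading \<in> cartan N g \<and>
      (\<forall>a b. simple_pos a b \<longrightarrow> eps_diff a b levi_grading = (if levi_pos a b then 0 else 1))"
    unfolding levi_grading_def by (rule someI2_bex) auto
  then show "levi_grading \<in> cartan N g"
    and "simple_pos a b \<Longrightarrow> eps_diff a b levi_grading = (if levi_pos a b then 0 else 1)"
    by auto
qed

lemma eps_diff_levi_grading_decomp:
  "agree_on_cartan N g (eps_diff a b) (\<lambda>H. eps_diff c d H + eps_diff e f H) \<Longrightarrow>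
    eps_diff a b levi_grading = eps_diff c d levi_grading + eps_diff e f levi_grading"
  using levi_grading_cartan by (auto simp: agree_on_cartan_def)

lemma eps_diff_levi_grading_nat:
  "pos_root_index N g a b \<Longrightarrow> \<exists>n. eps_diff a b levi_grading = of_nat n"
proof (induction "b - a" arbitrary: a b rule: less_induct)
  case less
  show ?case
  proof (cases "simple_pos a b")
    case True
    then show ?thesis
      using eps_diff_levi_grading_simple[OF True] by (cases "levi_pos a b") (auto intro: exI[of _ 0] exI[of _ 1])
  next
    case False
    then obtain c d e f where cd: "pos_root_index N g c d" "simple_pos e f" "d - c < b - a"
        "agree_on_cartan N g (eps_diff a b) (\<lambda>H. eps_diff c d H + eps_diff e f H)"
      using pos_root_index_decomp[OF less.prems] by blast
    obtain n where "eps_diff c d levi_grading = of_nat n" using less.hyps[OF cd(3,1)] by blast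
    then show ?thesis
      using eps_diff_levi_grading_decomp[OF cd(4)] eps_diff_levi_grading_simple[OF cd(2)]
      by (cases "levi_pos e f") (auto intro: exI[of _ n] exI[of _ "n + 1"])
  qed
qed

lemma simple_root_at_simple_pos:
  assumes "simple_roots N g (pos_root N g) \<beta>"
  shows "\<exists>e f. simple_pos e f \<and> agree_on_cartan N g (eps_diff e f) \<beta>"
proof -
  have "pos_root N g \<beta>" using assms by (simp add: simple_roots_def)
  then obtain a b where ab: "pos_root_index N g a b" "agree_on_cartan N g (eps_diff a b) \<beta>"
    using pos_root_index_of_pos_root by blast
  have "simple_pos a b"
  proof (rule ccontr)
    assume "\<not> simple_pos a b"
    then obtain c d e f where cd: "pos_root_index N g c d" "simple_pos e f"
        "agree_on_cartan N g (eps_diff a b) (\<lambda>H. eps_diff c d H + eps_diff e f H)"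
      using pos_root_index_decomp[OF ab(1)] by blast
    have "pos_root N g (eps_diff c d)" "pos_root N g (eps_diff e f)"
      using pos_root_of_index cd(1) simple_pos_root_index[OF cd(2)] by auto
    moreover have "\<forall>H \<in> cartan N g. \<beta> H = eps_diff c d H + eps_diff e f H"
      using ab(2) cd(3) by (auto simp: agree_on_cartan_def)
    ultimately show False using assms unfolding simple_roots_def by blast
  qed
  then show ?thesis using ab(2) by blast
qed

text \<open>Induction on the height: a positive root of \<open>\<aa>\<close> is either simple in \<open>\<aa>\<close>, hence simple in
  \<open>\<gg>\<close> and of grading zero by construction, or the sum of two positive roots of \<open>\<aa>\<close> of smaller height.\<close>
lemma levi_root_levi_grading_zero_index:
  assumes "\<beta> \<in> R'" "pos_root N g \<beta>" "pos_root_index N g a b" "agree_on_cartan N g (eps_diff a b) \<beta>"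
  shows "\<beta> levi_grading = 0"
  using assms
proof (induction "b - a" arbitrary: \<beta> a b rule: less_induct)
  case less
  show ?case
  proof (cases "simple_roots N g (\<lambda>\<beta>. \<beta> \<in> R' \<and> pos_root N g \<beta>) \<beta>")
    case True
    obtain e f where ef: "simple_pos e f" "agree_on_cartan N g (eps_diff e f) \<beta>"
      using simple_root_at_simple_pos simple[OF True] by blast
    have "levi_pos e f"
      using less.prems(1) ef(2) by (auto simp: levi_pos_def agree_on_cartan_def)
    then show ?thesis
      using eps_diff_levi_grading_simple[OF ef(1)] ef(2) levi_grading_cartan
      by (auto simp: agree_on_cartan_def)
  next
    case False
    then obtain \<beta>1 \<beta>2 where \<beta>12: "\<beta>1 \<in> R'" "pos_root N g \<beta>1" "\<beta>2 \<in> R'" "pos_root N g \<beta>2"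
        "\<forall>H \<in> cartan N g. \<beta> H = \<beta>1 H + \<beta>2 H"
      using less.prems(1,2) by (auto simp: simple_roots_def)
    obtain c1 d1 where cd1: "pos_root_index N g c1 d1" "agree_on_cartan N g (eps_diff c1 d1) \<beta>1"
      using pos_root_index_of_pos_root \<beta>12(2) by blast
    obtain c2 d2 where cd2: "pos_root_index N g c2 d2" "agree_on_cartan N g (eps_diff c2 d2) \<beta>2"
      using pos_root_index_of_pos_root \<beta>12(4) by blast
    have "of_nat (b - a) = (of_nat (d1 - c1) + of_nat (d2 - c2) :: complex)"
      using eps_diff_height_elem_index[OF less.prems(3)] eps_diff_height_elem_index[OF cd1(1)]
        eps_diff_height_elem_index[OF cd2(1)] less.prems(4) cd1(2) cd2(2) \<beta>12(5) height_elem_cartan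
      by (auto simp: agree_on_cartan_def)
    then have "b - a = (d1 - c1) + (d2 - c2)" by (metis of_nat_add of_nat_eq_iff)
    moreover have "c1 < d1" "c2 < d2" using cd1(1) cd2(1) by (auto simp: pos_root_index_def)
    ultimately have "d1 - c1 < b - a" "d2 - c2 < b - a" by auto
    then have "\<beta>1 levi_grading = 0" "\<beta>2 levi_grading = 0"
      using less.hyps \<beta>12(1-4) cd1 cd2 by blast+
    then show ?thesis using \<beta>12(5) levi_grading_cartan by auto
  qed
qed

lemma levi_root_levi_grading_zero: "\<beta> \<in> R' \<Longrightarrow> pos_root N g \<beta> \<Longrightarrow> \<beta> levi_grading = 0"
  using levi_root_levi_grading_zero_index pos_root_index_of_pos_root by blast

lemma grading_zero_levi_pos:
  "pos_root_index N g a b \<Longrightarrow> eps_diff a b levi_grading = 0 \<Longrightarrow> levi_pos a b"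
proof (induction "b - a" arbitrary: a b rule: less_induct)
  case less
  show ?case
  proof (cases "simple_pos a b")
    case True
    then show ?thesis using eps_diff_levi_grading_simple less.prems(2) by (cases "levi_pos a b") auto
  next
    case False
    then obtain c d e f where cd: "pos_root_index N g c d" "simple_pos e f" "d - c < b - a"
        "agree_on_cartan N g (eps_diff a b) (\<lambda>H. eps_diff c d H + eps_diff e f H)"
      using pos_root_index_decomp[OF less.prems(1)] by blast
    obtain n where n: "eps_diff c d levi_grading = of_nat n"
      using eps_diff_levi_grading_nat[OF cd(1)] by blast
    have sum0: "of_nat n + (if levi_pos e f then 0 else 1) = (0 :: complex)"
      using eps_diff_levi_grading_decomp[OF cd(4)] eps_diff_levi_grading_simple[OF cd(2)] less.prems(2) n
      by simp
    have "levi_pos e f \<and> n = 0"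
    proof (cases "levi_pos e f")
      case False
      then have "of_nat (Suc n) = (0 :: complex)" using sum0 by (simp add: add.commute)
      then show ?thesis by (simp del: of_nat_Suc)
    qed (use sum0 in simp)
    then have "levi_pos e f" "n = 0" by auto
    then have "levi_pos c d" using less.hyps[OF cd(3,1)] n by simp
    then obtain \<rho>1 \<rho>2 where \<rho>: "\<rho>1 \<in> R'" "agree_on_cartan N g \<rho>1 (eps_diff c d)"
        "\<rho>2 \<in> R'" "agree_on_cartan N g \<rho>2 (eps_diff e f)"
      using \<open>levi_pos e f\<close> by (auto simp: levi_pos_def)
    have sum: "agree_on_cartan N g (eps_diff a b) (\<lambda>H. \<rho>1 H + \<rho>2 H)"
      using \<rho>(2,4) cd(4) by (auto simp: agree_on_cartan_def)
    then have "is_root N g (\<lambda>H. \<rho>1 H + \<rho>2 H)"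
      using is_root_agree pos_root_of_index[OF less.prems(1)] by (auto simp: pos_root_def)
    then have "(\<lambda>H. \<rho>1 H + \<rho>2 H) \<in> R'" using R'_add \<rho>(1,3) by blast
    then show ?thesis using sum by (auto simp: levi_pos_def agree_on_cartan_def)
  qed
qed

lemma grading_zero_root_in_levi:
  assumes "pos_root N g \<beta>" "\<beta> levi_grading = 0"
  shows "\<exists>\<rho> \<in> R'. agree_on_cartan N g \<rho> \<beta>"
proof -
  obtain a b where ab: "pos_root_index N g a b" "agree_on_cartan N g (eps_diff a b) \<beta>"
    using pos_root_index_of_pos_root[OF assms(1)] by blast
  have "levi_pos a b"
    using grading_zero_levi_pos[OF ab(1)] ab(2) assms(2) levi_grading_cartan
    by (auto simp: agree_on_cartan_def)
  then show ?thesis using ab(2) by (auto simp: levi_pos_def agree_on_cartan_def)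
qed

lemma Qplus_levi_grading_zero: "Qplus N g R' \<mu> \<Longrightarrow> \<mu> levi_grading = 0"
proof -
  assume "Qplus N g R' \<mu>"
  then obtain as where as: "\<forall>\<alpha> \<in> set as. \<alpha> \<in> R' \<and> pos_root N g \<alpha>"
      "\<forall>H \<in> cartan N g. \<mu> H = sum_list (map (\<lambda>\<alpha>. \<alpha> H) as)"
    by (auto simp: Qplus_def)
  have "sum_list (map (\<lambda>\<alpha>. \<alpha> levi_grading) as) = 0"
    using as(1) by (induction as) (auto simp: levi_root_levi_grading_zero)
  then show ?thesis using as(2) levi_grading_cartan by auto
qed

end

section \<open>Modules over the current algebra\<close>

definition mat_support :: "nat \<Rightarrow> complex mat \<Rightarrow> (nat \<times> nat) set" where
  "mat_support N Y = {(i,j). i < N \<and> j < N \<and> Y $$ (i,j) \<noteq> 0}"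

lemma finite_mat_support: "finite (mat_support N Y)"
  by (rule finite_subset[of _ "{..<N} \<times> {..<N}"]) (auto simp: mat_support_def)

context std_matrix_lie_algebra
begin

lemma levi_in_g: "X \<in> levi N g R \<Longrightarrow> X \<in> g"
  unfolding levi_def
  by (induction rule: mat_span.induct) (auto intro: g_zero g_add g_smult g_lie_br root_space_in_g)

lemma nneg_split_root_component:
  assumes Y: "Y \<in> nneg N g" "Y \<noteq> 0\<^sub>m N N"
  shows "\<exists>C Z \<gamma>. C \<in> nneg N g \<and> C \<in> root_space N g \<gamma> \<and> C \<noteq> 0\<^sub>m N N \<and> Z \<in> nneg N g \<and> Y = C + Z \<and>
    card (mat_support N Z) < card (mat_support N Y)"
proof -
  have Yg: "Y \<in> g" and Y0: "\<forall>i<N. \<forall>j<N. i \<le> j \<longrightarrow> Y $$ (i,j) = 0"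
    using Y(1) by (auto simp: nneg_def)
  have YC: "Y \<in> carrier_mat N N" using g_carrier_mat[OF Yg] .
  obtain a b where ab: "b < a" "a < N" "Y $$ (a,b) \<noteq> 0"
    using nneg_nonzero_entry[OF Y] by blast
  obtain C where C: "C \<in> root_space N g (eps_diff a b)" "C $$ (a,b) = Y $$ (a,b)"
      "\<forall>i<N. \<forall>j<N. C $$ (i,j) = 0 \<or> C $$ (i,j) = Y $$ (i,j)"
    using root_component_root_space[OF Yg, of a b] ab by auto
  have CC: "C \<in> carrier_mat N N" using g_carrier_mat root_space_in_g C(1) by blast
  define Z where "Z = Y + (-1) \<cdot>\<^sub>m C"
  have ZC: "Z \<in> carrier_mat N N" using YC CC by (simp add: Z_def)
  have Ze: "\<And>i j. i < N \<Longrightarrow> j < N \<Longrightarrow> Z $$ (i,j) = Y $$ (i,j) - C $$ (i,j)"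
    using YC CC by (simp add: Z_def)
  have "Y = C + Z" using YC CC ZC Ze by (intro eq_matI) auto
  moreover have C0: "C $$ (i,j) = 0" if "i < N" "j < N" "i \<le> j" for i j
    using C(3) Y0 that by metis
  then have "C \<in> nneg N g"
    using root_space_in_g[OF C(1)] by (simp add: nneg_def)
  moreover have "Z \<in> g" unfolding Z_def using g_add g_smult Yg root_space_in_g[OF C(1)] by blast
  then have "Z \<in> nneg N g"
    using Ze Y0 C0 by (simp add: nneg_def)
  moreover have sub: "mat_support N Z \<subseteq> mat_support N Y - {(a,b)}"
  proof
    fix p assume "p \<in> mat_support N Z"
    then obtain i j where ij: "p = (i,j)" "i < N" "j < N" "Z $$ (i,j) \<noteq> 0"
      by (auto simp: mat_support_def)
    have "C $$ (i,j) = 0 \<or> C $$ (i,j) = Y $$ (i,j)" using C(3) ij(2,3) by blast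
    then have "Y $$ (i,j) \<noteq> 0" using Ze[OF ij(2,3)] ij(4) by auto
    moreover have "(i,j) \<noteq> (a,b)" using Ze[OF ij(2,3)] ij(4) C(2) by auto
    ultimately show "p \<in> mat_support N Y - {(a,b)}" using ij by (auto simp: mat_support_def)
  qed
  moreover have "card (mat_support N Z) < card (mat_support N Y)"
  proof -
    have "card (mat_support N Z) \<le> card (mat_support N Y - {(a,b)})"
      using sub finite_mat_support by (intro card_mono) auto
    also have "\<dots> < card (mat_support N Y)"
      using finite_mat_support ab by (intro card_Diff1_less) (auto simp: mat_support_def)
    finally show ?thesis .
  qed
  moreover have "C \<noteq> 0\<^sub>m N N" using C(2) ab by auto
  ultimately show ?thesis using C(1) by blast
qed

lemma nneg_root_vector_induct[consumes 1, case_names zero root_vector]: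
  assumes "Y \<in> nneg N g" and "P (0\<^sub>m N N)"
    and step: "\<And>C Z \<gamma>. C \<in> nneg N g \<Longrightarrow> C \<in> root_space N g \<gamma> \<Longrightarrow> C \<noteq> 0\<^sub>m N N \<Longrightarrow>
      Z \<in> nneg N g \<Longrightarrow> P Z \<Longrightarrow> P (C + Z)"
  shows "P Y"
  using assms(1)
proof (induction "card (mat_support N Y)" arbitrary: Y rule: less_induct)
  case less
  show ?case
  proof (cases "Y = 0\<^sub>m N N")
    case False
    then show ?thesis using nneg_split_root_component[OF less.prems] less.hyps step by metis
  qed (use assms(2) in simp)
qed

end

text \<open>The vectors \<open>(Y\<^sub>1 \<otimes> t\<^sup>k\<^sup>\<^sub>1) \<cdots> (Y\<^sub>r \<otimes> t\<^sup>k\<^sup>\<^sub>r).w\<close> with nonzero lowering root vectors \<open>Y\<^sub>i\<close>,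
  each tagged with its weight.\<close>
inductive_set lowering_monomials :: "nat \<Rightarrow> complex mat set \<Rightarrow> (nat \<Rightarrow> complex mat \<Rightarrow> complex mat)
    \<Rightarrow> complex vec \<Rightarrow> (complex mat \<Rightarrow> complex) \<Rightarrow> (complex vec \<times> (complex mat \<Rightarrow> complex)) set"
  for N g \<rho> w lam where
  gen: "(w, lam) \<in> lowering_monomials N g \<rho> w lam"
| act: "(u, \<beta>) \<in> lowering_monomials N g \<rho> w lam \<Longrightarrow> Y \<in> nneg N g \<Longrightarrow> Y \<in> root_space N g \<gamma> \<Longrightarrow>
    Y \<noteq> 0\<^sub>m N N \<Longrightarrow> (\<rho> k Y *\<^sub>v u, \<lambda>H. \<beta> H + \<gamma> H) \<in> lowering_monomials N g \<rho> w lam"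

locale levi_module = levi_data +
  fixes m :: nat and \<rho> :: "nat \<Rightarrow> complex mat \<Rightarrow> complex mat" and w :: "complex vec"
    and lam :: "complex mat \<Rightarrow> complex"
  assumes rep: "current_rep N g m \<rho>"
    and w_weight_space: "w \<in> weight_space N g m \<rho> lam"
    and cyclic: "cyclic_sub m \<rho> (nneg N g) w = carrier_vec m"
begin

abbreviation "monomials \<equiv> lowering_monomials N g \<rho> w lam"

lemma rho_carrier: "X \<in> g \<Longrightarrow> \<rho> k X \<in> carrier_mat m m"
  using rep by (auto simp: current_rep_def)

lemma rho_add: "X \<in> g \<Longrightarrow> Y \<in> g \<Longrightarrow> \<rho> k (X + Y) = \<rho> k X + \<rho> k Y"
  using rep by (auto simp: current_rep_def)

lemma rho_smult: "X \<in> g \<Longrightarrow> \<rho> k (c \<cdot>\<^sub>m X) = c \<cdot>\<^sub>m \<rho> k X"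
  using rep by (auto simp: current_rep_def)

lemma rho_lie_br: "X \<in> g \<Longrightarrow> Y \<in> g \<Longrightarrow> \<rho> (k + l) (lie_br X Y) = lie_br (\<rho> k X) (\<rho> l Y)"
  using rep by (auto simp: current_rep_def)

lemma w_carrier: "w \<in> carrier_vec m"
  using w_weight_space by (auto simp: weight_space_def)

lemma rho_act_carrier: "X \<in> g \<Longrightarrow> u \<in> carrier_vec m \<Longrightarrow> \<rho> k X *\<^sub>v u \<in> carrier_vec m"
  using rho_carrier by (rule mult_mat_vec_carrier)

lemma rho_act_add:
  "X \<in> g \<Longrightarrow> u \<in> carrier_vec m \<Longrightarrow> v \<in> carrier_vec m \<Longrightarrow> \<rho> k X *\<^sub>v (u + v) = \<rho> k X *\<^sub>v u + \<rho> k X *\<^sub>v v"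
  using rho_carrier by (rule mult_add_distrib_mat_vec)

lemma rho_act_smult: "X \<in> g \<Longrightarrow> u \<in> carrier_vec m \<Longrightarrow> \<rho> k X *\<^sub>v (c \<cdot>\<^sub>v u) = c \<cdot>\<^sub>v (\<rho> k X *\<^sub>v u)"
  using rho_carrier by (rule mult_mat_vec)

lemma rho_act_zero_vec: "X \<in> g \<Longrightarrow> \<rho> k X *\<^sub>v 0\<^sub>v m = 0\<^sub>v m"
  using rho_carrier by (rule mult_mat_vec_zero)

lemma rho_zero_act: "u \<in> carrier_vec m \<Longrightarrow> \<rho> k (0\<^sub>m N N) *\<^sub>v u = 0\<^sub>v m"
proof -
  assume u: "u \<in> carrier_vec m"
  define A where "A = \<rho> k (0\<^sub>m N N)"
  have A: "A \<in> carrier_mat m m" unfolding A_def using rho_carrier[OF g_zero] .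
  have "A = 0 \<cdot>\<^sub>m A" unfolding A_def using rho_smult[OF g_zero, of k 0] by simp
  then have "A *\<^sub>v u = (0 \<cdot>\<^sub>m A) *\<^sub>v u" by (rule arg_cong)
  also have "\<dots> = 0 \<cdot>\<^sub>v (A *\<^sub>v u)" by (rule smult_mult_mat_vec[OF A u])
  also have "\<dots> = 0\<^sub>v m" using A u by (intro eq_vecI) auto
  finally show ?thesis unfolding A_def .
qed

lemma rho_commutator_act:
  assumes X: "X \<in> g" and Y: "Y \<in> g" and u: "u \<in> carrier_vec m"
  shows "\<rho> k X *\<^sub>v (\<rho> l Y *\<^sub>v u) = \<rho> l Y *\<^sub>v (\<rho> k X *\<^sub>v u) + \<rho> (k + l) (lie_br X Y) *\<^sub>v u"
proof -
  have A: "\<rho> k X \<in> carrier_mat m m" and B: "\<rho> l Y \<in> carrier_mat m m" using rho_carrier X Y by auto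
  have "\<rho> (k + l) (lie_br X Y) *\<^sub>v u = (\<rho> k X * \<rho> l Y) *\<^sub>v u - (\<rho> l Y * \<rho> k X) *\<^sub>v u"
    unfolding rho_lie_br[OF X Y] unfolding lie_br_def using A B u by (subst minus_mult_distrib_mat_vec) auto
  also have "\<dots> = \<rho> k X *\<^sub>v (\<rho> l Y *\<^sub>v u) - \<rho> l Y *\<^sub>v (\<rho> k X *\<^sub>v u)"
    using A B u by simp
  finally have "\<rho> (k + l) (lie_br X Y) *\<^sub>v u = \<rho> k X *\<^sub>v (\<rho> l Y *\<^sub>v u) - \<rho> l Y *\<^sub>v (\<rho> k X *\<^sub>v u)" .
  then show ?thesis using A B u by (auto intro!: eq_vecI)
qed

lemma rho_triangular_parts_act:
  assumes X: "X \<in> g" and u: "u \<in> carrier_vec m"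
  shows "\<rho> k X *\<^sub>v u =
    \<rho> k (upper_part N X) *\<^sub>v u + \<rho> k (diag_part N X) *\<^sub>v u + \<rho> k (lower_part N X) *\<^sub>v u"
proof -
  have parts: "upper_part N X \<in> g" "diag_part N X \<in> g" "lower_part N X \<in> g"
    using g_upper_part g_diag_part g_lower_part X by auto
  have "\<rho> k X = \<rho> k (upper_part N X) + \<rho> k (diag_part N X) + \<rho> k (lower_part N X)"
    using triangular_parts_sum[OF g_carrier_mat[OF X]] rho_add parts g_add by metis
  moreover have "\<rho> k (upper_part N X) + \<rho> k (diag_part N X) \<in> carrier_mat m m"
    using parts rho_carrier by simp
  ultimately show ?thesis
    using parts rho_carrier u by (simp add: add_mult_distrib_mat_vec[of _ m m])
qed

lemma root_vector_weight_space:
  assumes v: "v \<in> weight_space N g m \<rho> \<nu>" and Y: "Y \<in> root_space N g \<gamma>"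
  shows "\<rho> k Y *\<^sub>v v \<in> weight_space N g m \<rho> (\<lambda>H. \<nu> H + \<gamma> H)"
proof -
  have vC: "v \<in> carrier_vec m" using v by (auto simp: weight_space_def)
  have Yg: "Y \<in> g" using root_space_in_g Y by auto
  have "\<rho> 0 H *\<^sub>v (\<rho> k Y *\<^sub>v v) = (\<nu> H + \<gamma> H) \<cdot>\<^sub>v (\<rho> k Y *\<^sub>v v)" if H: "H \<in> cartan N g" for H
  proof -
    have "lie_br H Y = \<gamma> H \<cdot>\<^sub>m Y" using Y H by (auto simp: root_space_def)
    then have "\<rho> 0 H *\<^sub>v (\<rho> k Y *\<^sub>v v) = \<rho> k Y *\<^sub>v (\<rho> 0 H *\<^sub>v v) + \<gamma> H \<cdot>\<^sub>v (\<rho> k Y *\<^sub>v v)"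
      using rho_commutator_act[OF cartan_in_g[OF H] Yg vC, of 0 k] rho_smult[OF Yg]
        smult_mult_mat_vec[OF rho_carrier[OF Yg] vC] by simp
    also have "\<dots> = \<nu> H \<cdot>\<^sub>v (\<rho> k Y *\<^sub>v v) + \<gamma> H \<cdot>\<^sub>v (\<rho> k Y *\<^sub>v v)"
      using v H vC Yg by (auto simp: weight_space_def rho_act_smult)
    finally show ?thesis using vC Yg rho_carrier by (auto intro!: eq_vecI simp: algebra_simps)
  qed
  then show ?thesis using rho_act_carrier[OF Yg vC] by (auto simp: weight_space_def)
qed

end

context levi_module
begin

lemma monomial_weight: "(u, \<beta>) \<in> monomials \<Longrightarrow> u \<in> weight_space N g m \<rho> \<beta>"
  by (induction rule: lowering_monomials.induct) (use w_weight_space root_vector_weight_space in auto)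

lemma monomial_carrier: "(u, \<beta>) \<in> monomials \<Longrightarrow> u \<in> carrier_vec m"
  using monomial_weight by (auto simp: weight_space_def)

lemma monomial_height:
  "(u, \<beta>) \<in> monomials \<Longrightarrow>
    \<exists>r. \<beta> (height_elem N) = lam (height_elem N) - of_nat r \<and> (r = 0 \<longrightarrow> u = w)"
proof (induction rule: lowering_monomials.induct)
  case (act u \<beta> Y \<gamma> k)
  obtain r where r: "\<beta> (height_elem N) = lam (height_elem N) - of_nat r" using act.IH by auto
  obtain a b where ab: "b < a" "a < N" "Y $$ (a,b) \<noteq> 0"
    using nneg_nonzero_entry[OF act.hyps(2,4)] by blast
  have "\<gamma> (height_elem N) = - of_nat (a - b)"
    using root_space_height_elem[OF act.hyps(3)] ab by (simp add: of_nat_diff)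
  then show ?case using r ab by (intro exI[of _ "r + (a - b)"]) auto
qed auto

text \<open>Each lowering factor lowers the \<open>levi_grading\<close>-weight by a natural number, and factors of
  grading zero belong to \<open>\<aa>\<close>.\<close>
lemma monomial_levi_grading:
  "(u, \<beta>) \<in> monomials \<Longrightarrow> \<exists>r. \<beta> levi_grading = lam levi_grading - of_nat r \<and>
    (r = 0 \<longrightarrow> u \<in> cyclic_sub m \<rho> (levi N g R') w)"
proof (induction rule: lowering_monomials.induct)
  case gen
  then show ?case by (auto intro: cyclic_sub.gen)
next
  case (act u \<beta> Y \<gamma> k)
  obtain r where r: "\<beta> levi_grading = lam levi_grading - of_nat r"
      "r = 0 \<longrightarrow> u \<in> cyclic_sub m \<rho> (levi N g R') w"
    using act.IH by auto
  obtain a b where ab: "b < a" "a < N" "Y $$ (a,b) \<noteq> 0"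
    using nneg_nonzero_entry[OF act.hyps(2,4)] by blast
  have ba: "pos_root_index N g b a"
    using lower_entry_pos_root_index[OF root_space_in_g[OF act.hyps(3)] ab] .
  obtain n where n: "eps_diff b a levi_grading = of_nat n"
    using eps_diff_levi_grading_nat[OF ba] by blast
  have \<gamma>: "agree_on_cartan N g (eps_diff a b) \<gamma>"
    using root_space_entry_agree[OF act.hyps(3)] ab by auto
  have "\<gamma> levi_grading = - eps_diff b a levi_grading"
    using \<gamma> levi_grading_cartan by (auto simp: agree_on_cartan_def eps_diff_def)
  then have \<gamma>_n: "\<gamma> levi_grading = - of_nat n" using n by simp
  show ?case
  proof (intro exI[of _ "r + n"] conjI impI)
    show "\<beta> levi_grading + \<gamma> levi_grading = lam levi_grading - of_nat (r + n)"
      using r \<gamma>_n by simp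
  next
    assume "r + n = 0"
    then have u: "u \<in> cyclic_sub m \<rho> (levi N g R') w" and "eps_diff b a levi_grading = 0"
      using r n by auto
    then obtain \<rho>' where \<rho>': "\<rho>' \<in> R'" "agree_on_cartan N g \<rho>' (eps_diff b a)"
      using grading_zero_root_in_levi[OF pos_root_of_index[OF ba]] by blast
    have "agree_on_cartan N g (\<lambda>H. - \<rho>' H) \<gamma>"
      using \<rho>'(2) \<gamma> by (auto simp: agree_on_cartan_def eps_diff_def)
    then have "Y \<in> root_space N g (\<lambda>H. - \<rho>' H)" using root_space_agree act.hyps(3) by blast
    then have "Y \<in> levi N g R'"
      using R'_neg[OF \<rho>'(1)] unfolding levi_def by (blast intro: mat_span.base)
    then show "\<rho> k Y *\<^sub>v u \<in> cyclic_sub m \<rho> (levi N g R') w" using u by (rule cyclic_sub.act)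
  qed
qed

lemma monomial_nneg_act:
  assumes u: "(u, \<beta>) \<in> monomials" and Y: "Y \<in> nneg N g"
  shows "\<rho> k Y *\<^sub>v u \<in> vec_span m (fst ` monomials)"
  using Y
proof (induction rule: nneg_root_vector_induct)
  case zero
  then show ?case using rho_zero_act[OF monomial_carrier[OF u]] by (simp add: vec_span.zero)
next
  case (root_vector C Z \<gamma>)
  have "(\<rho> k C *\<^sub>v u, \<lambda>H. \<beta> H + \<gamma> H) \<in> monomials"
    using lowering_monomials.act[OF u root_vector(1-3)] .
  then have "\<rho> k C *\<^sub>v u \<in> vec_span m (fst ` monomials)" by (force intro: vec_span.base)
  moreover have "C \<in> g" "Z \<in> g" using root_vector(1,4) by (auto simp: nneg_def)
  ultimately show ?case
    using root_vector(5) rho_add monomial_carrier[OF u] rho_carrier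
    by (simp add: add_mult_distrib_mat_vec[of _ m m] vec_span.add)
qed

lemma monomial_span_nneg_closed:
  assumes v: "v \<in> vec_span m (fst ` monomials)" and Y: "Y \<in> nneg N g"
  shows "\<rho> k Y *\<^sub>v v \<in> vec_span m (fst ` monomials)"
proof -
  have Yg: "Y \<in> g" using Y by (auto simp: nneg_def)
  have C: "fst ` monomials \<subseteq> carrier_vec m" using monomial_carrier by force
  from v show ?thesis
  proof (induction rule: vec_span.induct)
    case zero
    show ?case using rho_act_zero_vec[OF Yg] by (simp add: vec_span.zero)
  next
    case (base v)
    then show ?case using monomial_nneg_act Y by force
  next
    case (add u v)
    have "u \<in> carrier_vec m" "v \<in> carrier_vec m" using add.hyps vec_span_carrier C by blast+
    with add.IH show ?case by (simp add: rho_act_add[OF Yg] vec_span.add)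
  next
    case (smult u c)
    have "u \<in> carrier_vec m" using smult.hyps vec_span_carrier C by blast
    with smult.IH show ?case by (simp add: rho_act_smult[OF Yg] vec_span.smult)
  qed
qed

lemma monomial_span_all: "v \<in> carrier_vec m \<Longrightarrow> v \<in> vec_span m (fst ` monomials)"
proof -
  assume "v \<in> carrier_vec m"
  then have "v \<in> cyclic_sub m \<rho> (nneg N g) w" using cyclic by simp
  then show ?thesis
  proof (induction rule: cyclic_sub.induct)
    case gen then show ?case by (force intro: vec_span.base lowering_monomials.gen)
  next
    case zero then show ?case by (rule vec_span.zero)
  next
    case (add u v) then show ?case by (blast intro: vec_span.add)
  next
    case (smult u c) then show ?case by (blast intro: vec_span.smult)
  next
    case (act X u k) then show ?case using monomial_span_nneg_closed by blast
  qed
qed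

lemma monomial_span_eigen:
  assumes H: "H \<in> cartan N g" and v: "v \<in> carrier_vec m" and e: "\<rho> 0 H *\<^sub>v v = e \<cdot>\<^sub>v v"
  shows "v \<in> vec_span m (fst ` {p \<in> monomials. snd p H = e})"
proof (rule eigenvector_in_eigen_span[OF rho_carrier[OF cartan_in_g[OF H]] _ _ e])
  show "v \<in> vec_span m (fst ` monomials)" using monomial_span_all[OF v] .
  fix p assume "p \<in> monomials"
  then show "fst p \<in> carrier_vec m \<and> \<rho> 0 H *\<^sub>v fst p = snd p H \<cdot>\<^sub>v fst p"
    using monomial_weight[of "fst p" "snd p"] H by (auto simp: weight_space_def)
qed

end

context levi_module
begin

definition levi_nneg :: "complex mat set" where
  "levi_nneg = {Y \<in> nneg N g. \<exists>\<gamma> \<in> R'. Y \<in> root_space N g \<gamma>}"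

definition levi_borel :: "complex mat set" where
  "levi_borel = cartan N g \<union> {X \<in> npos N g. \<exists>\<alpha> \<in> R'. X \<in> root_space N g \<alpha>}"

abbreviation "levi_lowering \<equiv> cyclic_sub m \<rho> levi_nneg w"

abbreviation "weight_sum \<equiv>
  vec_sum_span m (\<Union>\<mu> \<in> {\<mu>. Qplus N g R' \<mu>}. weight_space N g m \<rho> (\<lambda>H. lam H - \<mu> H))"

lemma levi_lowering_carrier: "u \<in> levi_lowering \<Longrightarrow> u \<in> carrier_vec m"
  by (induction rule: cyclic_sub.induct)
    (auto simp: levi_nneg_def nneg_def intro: w_carrier rho_act_carrier)

lemma levi_borel_root_space:
  "X \<in> levi_borel \<Longrightarrow> \<exists>\<alpha>. X \<in> root_space N g \<alpha> \<and> (\<alpha> \<in> R' \<or> \<alpha> = (\<lambda>H. 0))"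
  using cartan_root_space_zero by (auto simp: levi_borel_def)

text \<open>A weight of \<open>W\<close> is \<open>\<lambda>\<close> minus a sum of positive roots, so its height is at most that of \<open>\<lambda>\<close>.\<close>
lemma raising_annihilates_w:
  assumes X: "X \<in> root_space N g \<alpha>" "X \<in> npos N g"
  shows "\<rho> k X *\<^sub>v w = 0\<^sub>v m"
proof (cases "X = 0\<^sub>m N N")
  case True
  then show ?thesis using rho_zero_act w_carrier by simp
next
  case False
  obtain a b where ab: "a < b" "b < N" "X $$ (a,b) \<noteq> 0"
    using npos_nonzero_entry[OF X(2) False] by blast
  have \<alpha>: "\<alpha> (height_elem N) = of_nat b - of_nat a"
    using root_space_height_elem[OF X(1)] ab by auto
  let ?v = "\<rho> k X *\<^sub>v w"
  have "?v \<in> weight_space N g m \<rho> (\<lambda>H. lam H + \<alpha> H)"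
    using root_vector_weight_space[OF w_weight_space X(1)] .
  then have "?v \<in> vec_span m (fst ` {p \<in> monomials. snd p (height_elem N) = lam (height_elem N) + \<alpha> (height_elem N)})"
    using monomial_span_eigen[OF height_elem_cartan] height_elem_cartan by (auto simp: weight_space_def)
  moreover have "{p \<in> monomials. snd p (height_elem N) = lam (height_elem N) + \<alpha> (height_elem N)} = {}"
  proof -
    have False if u: "(u, \<beta>) \<in> monomials" "\<beta> (height_elem N) = lam (height_elem N) + \<alpha> (height_elem N)"
      for u \<beta>
    proof -
      obtain r where "\<beta> (height_elem N) = lam (height_elem N) - of_nat r"
        using monomial_height[OF u(1)] by blast
      then have "of_nat (r + b) = (of_nat a :: complex)" using u(2) \<alpha> by (simp add: algebra_simps)
      then show False using ab by (simp only: of_nat_eq_iff)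
    qed
    then show ?thesis by auto
  qed
  ultimately show ?thesis using vec_span_empty by simp
qed

lemma cartan_act_w:
  assumes Z: "Z \<in> cartan N g"
  shows "\<rho> k Z *\<^sub>v w \<in> levi_lowering"
proof -
  let ?v = "\<rho> k Z *\<^sub>v w"
  have "?v \<in> weight_space N g m \<rho> (\<lambda>H. lam H + 0)"
    using root_vector_weight_space[OF w_weight_space cartan_root_space_zero[OF Z]] .
  then have "?v \<in> vec_span m (fst ` {p \<in> monomials. snd p (height_elem N) = lam (height_elem N)})"
    using monomial_span_eigen[OF height_elem_cartan] height_elem_cartan by (auto simp: weight_space_def)
  moreover have "fst ` {p \<in> monomials. snd p (height_elem N) = lam (height_elem N)} \<subseteq> {w}"
    using monomial_height by fastforce
  ultimately have "?v \<in> vec_span m {w}" using vec_span_mono by blast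
  then show ?thesis by (induction rule: vec_span.induct) (auto intro: cyclic_sub.intros)
qed

lemma levi_root_vector_act:
  assumes B: "B \<in> root_space N g \<beta>" and \<beta>: "is_root N g \<beta> \<Longrightarrow> \<beta> \<in> R'"
    and u: "u \<in> levi_lowering" and borel: "\<And>X k. X \<in> levi_borel \<Longrightarrow> \<rho> k X *\<^sub>v u \<in> levi_lowering"
  shows "\<rho> k B *\<^sub>v u \<in> levi_lowering"
proof -
  have Bg: "B \<in> g" using root_space_in_g[OF B] .
  have uC: "u \<in> carrier_vec m" using levi_lowering_carrier[OF u] .
  have root: "\<beta> \<in> R'"
    if P: "P \<in> root_space N g \<beta>" "P \<in> npos N g \<or> P \<in> nneg N g" "P \<noteq> 0\<^sub>m N N" for P
  proof -
    consider "P \<in> npos N g" | "P \<in> nneg N g" using P(2) by blast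
    then obtain i j where "i < N" "j < N" "i \<noteq> j" "P $$ (i,j) \<noteq> 0"
    proof cases
      case 1
      then obtain a b where "a < b" "b < N" "P $$ (a,b) \<noteq> 0" using npos_nonzero_entry P(3) by blast
      then show ?thesis using that[of a b] by auto
    next
      case 2
      then obtain a b where "b < a" "a < N" "P $$ (a,b) \<noteq> 0" using nneg_nonzero_entry P(3) by blast
      then show ?thesis using that[of a b] by auto
    qed
    then show ?thesis using \<beta> is_root_of_nonzero_entry[OF P(1)] by blast
  qed
  have "\<rho> k (upper_part N B) *\<^sub>v u \<in> levi_lowering"
  proof (cases "upper_part N B = 0\<^sub>m N N")
    case False
    then have "upper_part N B \<in> levi_borel"
      using root root_space_upper_part[OF B] upper_part_npos[OF Bg] by (auto simp: levi_borel_def)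
    then show ?thesis by (rule borel)
  qed (use rho_zero_act[OF uC] in \<open>simp add: cyclic_sub.zero\<close>)
  moreover have "\<rho> k (diag_part N B) *\<^sub>v u \<in> levi_lowering"
    using borel diag_part_cartan[OF Bg] by (auto simp: levi_borel_def)
  moreover have "\<rho> k (lower_part N B) *\<^sub>v u \<in> levi_lowering"
  proof (cases "lower_part N B = 0\<^sub>m N N")
    case False
    then have "lower_part N B \<in> levi_nneg"
      using root root_space_lower_part[OF B] lower_part_nneg[OF Bg] by (auto simp: levi_nneg_def)
    then show ?thesis using u by (rule cyclic_sub.act)
  qed (use rho_zero_act[OF uC] in \<open>simp add: cyclic_sub.zero\<close>)
  ultimately show ?thesis unfolding rho_triangular_parts_act[OF Bg uC] by (intro cyclic_sub.add)
qed

text \<open>The PBW argument: \<open>U(\<nn>\<^sup>-\<^sub>\<aa> \<otimes> \<complex>[t]).w\<close> is stable under \<open>(\<hh> \<oplus> \<nn>\<^sup>+\<^sub>\<aa>) \<otimes> \<complex>[t]\<close>; commute the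
  raising operator past the lowering ones until it hits \<open>w\<close>.\<close>
lemma levi_lowering_borel_closed:
  "u \<in> levi_lowering \<Longrightarrow> X \<in> levi_borel \<Longrightarrow> \<rho> k X *\<^sub>v u \<in> levi_lowering"
proof (induction arbitrary: X k rule: cyclic_sub.induct)
  case gen
  then show ?case
    using raising_annihilates_w cartan_act_w by (auto simp: levi_borel_def intro: cyclic_sub.zero)
next
  case zero
  have "X \<in> g" using zero cartan_in_g root_space_in_g by (auto simp: levi_borel_def)
  then show ?case by (simp add: rho_act_zero_vec cyclic_sub.zero)
next
  case (add u v)
  have "X \<in> g" using add.prems cartan_in_g root_space_in_g by (auto simp: levi_borel_def)
  then show ?case
    using add.IH add.prems levi_lowering_carrier add.hyps by (simp add: rho_act_add cyclic_sub.add)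
next
  case (smult u c)
  have "X \<in> g" using smult.prems cartan_in_g root_space_in_g by (auto simp: levi_borel_def)
  then show ?case
    using smult.IH smult.prems levi_lowering_carrier smult.hyps by (simp add: rho_act_smult cyclic_sub.smult)
next
  case (act Y u k')
  obtain \<gamma> where Y: "\<gamma> \<in> R'" "Y \<in> root_space N g \<gamma>" using act.hyps(1) by (auto simp: levi_nneg_def)
  obtain \<alpha> where X: "X \<in> root_space N g \<alpha>" "\<alpha> \<in> R' \<or> \<alpha> = (\<lambda>H. 0)"
    using levi_borel_root_space[OF act.prems] by blast
  have Xg: "X \<in> g" and Yg: "Y \<in> g" using root_space_in_g X Y by auto
  have uC: "u \<in> carrier_vec m" using levi_lowering_carrier[OF act.hyps(2)] .
  have "\<rho> k' Y *\<^sub>v (\<rho> k X *\<^sub>v u) \<in> levi_lowering"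
    using act.IH[OF act.prems] act.hyps(1) by (rule cyclic_sub.act[rotated])
  moreover have "\<rho> (k + k') (lie_br X Y) *\<^sub>v u \<in> levi_lowering"
  proof (rule levi_root_vector_act[OF lie_br_root_space[OF X(1) Y(2)] _ act.hyps(2) act.IH])
    show "(\<lambda>H. \<alpha> H + \<gamma> H) \<in> R'" if "is_root N g (\<lambda>H. \<alpha> H + \<gamma> H)"
      using X(2) R'_add[OF _ Y(1) that] Y(1) by auto
  qed
  ultimately show ?case
    unfolding rho_commutator_act[OF Xg Yg uC] by (rule cyclic_sub.add)
qed

lemma levi_act_levi_lowering:
  assumes X: "X \<in> levi N g R'" and u: "u \<in> levi_lowering"
  shows "\<rho> k X *\<^sub>v u \<in> levi_lowering"
proof -
  have uC: "u \<in> carrier_vec m" using levi_lowering_carrier[OF u] .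
  from X show ?thesis unfolding levi_def
  proof (induction rule: mat_span.induct)
    case zero
    show ?case using rho_zero_act[OF uC] by (simp add: cyclic_sub.zero)
  next
    case (base X)
    then obtain \<beta> where "X \<in> root_space N g \<beta>" "is_root N g \<beta> \<Longrightarrow> \<beta> \<in> R'"
    proof
      text \<open>Elements of \<open>[\<gg>\<^sub>\<alpha>, \<gg>\<^sub>-\<^sub>\<alpha>]\<close> have weight 0, which is not a root.\<close>
      assume "X \<in> {lie_br X Y |X Y \<alpha>. \<alpha> \<in> R' \<and> X \<in> root_space N g \<alpha> \<and> Y \<in> root_space N g (\<lambda>H. - \<alpha> H)}"
      then obtain X1 Y1 \<alpha> where "X = lie_br X1 Y1" "X1 \<in> root_space N g \<alpha>"
          "Y1 \<in> root_space N g (\<lambda>H. - \<alpha> H)"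
        by blast
      then show ?thesis using lie_br_root_space that by (fastforce simp: is_root_def)
    qed auto
    then show ?case using levi_root_vector_act u levi_lowering_borel_closed[OF u] by blast
  next
    case (add X Y)
    then have "X \<in> g" "Y \<in> g" using levi_in_g unfolding levi_def by auto
    then show ?case
      using add.IH rho_add rho_carrier uC by (simp add: add_mult_distrib_mat_vec[of _ m m] cyclic_sub.add)
  next
    case (smult X c)
    then have "X \<in> g" using levi_in_g unfolding levi_def by auto
    then show ?case
      using smult.IH rho_smult smult_mult_mat_vec[OF rho_carrier uC] by (simp add: cyclic_sub.smult)
  qed
qed

lemma levi_cyclic_le_levi_lowering: "u \<in> cyclic_sub m \<rho> (levi N g R') w \<Longrightarrow> u \<in> levi_lowering"
  by (induction rule: cyclic_sub.induct) (auto intro: cyclic_sub.intros levi_act_levi_lowering)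

end

context levi_module
begin

lemma weight_sum_carrier: "v \<in> weight_sum \<Longrightarrow> v \<in> carrier_vec m"
  by (induction rule: vec_sum_span.induct) (auto simp: weight_space_def)

lemma weight_space_smult: "v \<in> weight_space N g m \<rho> \<nu> \<Longrightarrow> c \<cdot>\<^sub>v v \<in> weight_space N g m \<rho> \<nu>"
  by (auto simp: weight_space_def rho_act_smult cartan_in_g smult_smult_assoc mult.commute)

lemma weight_sum_smult: "v \<in> weight_sum \<Longrightarrow> c \<cdot>\<^sub>v v \<in> weight_sum"
proof (induction rule: vec_sum_span.induct)
  case zero
  have "c \<cdot>\<^sub>v 0\<^sub>v m = 0\<^sub>v m" by (intro eq_vecI) auto
  then show ?case by (simp add: vec_sum_span.zero)
next
  case (base v)
  then show ?case using weight_space_smult by (blast intro: vec_sum_span.base)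
next
  case (add u v)
  then show ?case
    using smult_add_distrib_vec[OF weight_sum_carrier weight_sum_carrier] by (simp add: vec_sum_span.add)
qed

lemma Qplus_add_levi_root:
  assumes "Qplus N g R' \<mu>" "\<alpha> \<in> R'" "pos_root N g \<alpha>"
  shows "Qplus N g R' (\<lambda>H. \<mu> H + \<alpha> H)"
proof -
  obtain as where "\<forall>\<beta> \<in> set as. \<beta> \<in> R' \<and> pos_root N g \<beta>"
      "\<forall>H \<in> cartan N g. \<mu> H = sum_list (map (\<lambda>\<beta>. \<beta> H) as)"
    using assms(1) by (auto simp: Qplus_def)
  then show ?thesis
    unfolding Qplus_def using assms(2,3) by (intro exI[of _ "\<alpha> # as"]) auto
qed

lemma weight_sum_levi_nneg_closed:
  assumes Y: "Y \<in> levi_nneg" and v: "v \<in> weight_sum"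
  shows "\<rho> k Y *\<^sub>v v \<in> weight_sum"
proof -
  obtain \<gamma> where Y': "Y \<in> nneg N g" "\<gamma> \<in> R'" "Y \<in> root_space N g \<gamma>"
    using Y by (auto simp: levi_nneg_def)
  have Yg: "Y \<in> g" using root_space_in_g[OF Y'(3)] .
  from v show ?thesis
  proof (induction rule: vec_sum_span.induct)
    case zero
    then show ?case by (simp add: rho_act_zero_vec[OF Yg] vec_sum_span.zero)
  next
    case (base v)
    then obtain \<mu> where \<mu>: "Qplus N g R' \<mu>" "v \<in> weight_space N g m \<rho> (\<lambda>H. lam H - \<mu> H)" by blast
    show ?case
    proof (cases "Y = 0\<^sub>m N N")
      case True
      then show ?thesis
        using rho_zero_act \<mu>(2) by (simp add: weight_space_def vec_sum_span.zero)
    next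
      case False
      obtain a b where ab: "b < a" "a < N" "Y $$ (a,b) \<noteq> 0"
        using nneg_nonzero_entry[OF Y'(1) False] by blast
      have "agree_on_cartan N g (eps_diff a b) \<gamma>"
        using root_space_entry_agree[OF Y'(3)] ab by auto
      then have "agree_on_cartan N g (eps_diff b a) (\<lambda>H. - \<gamma> H)"
        unfolding agree_on_cartan_def eps_diff_def by (metis minus_diff_eq)
      then have "pos_root N g (\<lambda>H. - \<gamma> H)"
        using pos_root_agree pos_root_of_index[OF lower_entry_pos_root_index[OF Yg ab]] by blast
      then have "Qplus N g R' (\<lambda>H. \<mu> H + - \<gamma> H)"
        using Qplus_add_levi_root[OF \<mu>(1) R'_neg[OF Y'(2)]] by blast
      moreover have "\<rho> k Y *\<^sub>v v \<in> weight_space N g m \<rho> (\<lambda>H. lam H - (\<mu> H + - \<gamma> H))"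
        using root_vector_weight_space[OF \<mu>(2) Y'(3)] by (simp add: algebra_simps)
      ultimately show ?thesis by (blast intro: vec_sum_span.base)
    qed
  next
    case (add u v)
    then show ?case
      using rho_act_add[OF Yg weight_sum_carrier weight_sum_carrier] by (simp add: vec_sum_span.add)
  qed
qed

lemma levi_lowering_le_weight_sum: "u \<in> levi_lowering \<Longrightarrow> u \<in> weight_sum"
proof (induction rule: cyclic_sub.induct)
  case gen
  have "Qplus N g R' (\<lambda>H. 0)" unfolding Qplus_def by (intro exI[of _ "[]"]) auto
  then show ?case using w_weight_space by (force intro: vec_sum_span.base)
next
  case zero
  show ?case by (rule vec_sum_span.zero)
next
  case (add u v)
  then show ?case by (blast intro: vec_sum_span.add)
next
  case (smult u c)
  then show ?case by (blast intro: weight_sum_smult)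
next
  case (act X u k)
  then show ?case using weight_sum_levi_nneg_closed by blast
qed

text \<open>A vector of weight \<open>\<lambda> - \<mu>\<close> with \<open>\<mu> \<in> Q\<^sup>+\<^sub>\<aa>\<close> has \<open>levi_grading\<close>-weight \<open>\<lambda>(levi_grading)\<close>, so it is a
  combination of monomials of that grading, and these lie in \<open>U(\<aa> \<otimes> \<complex>[t]).w\<close>.\<close>
lemma weight_sum_le_levi_cyclic: "v \<in> weight_sum \<Longrightarrow> v \<in> cyclic_sub m \<rho> (levi N g R') w"
proof (induction rule: vec_sum_span.induct)
  case zero
  then show ?case by (rule cyclic_sub.zero)
next
  case (add u v)
  then show ?case by (blast intro: cyclic_sub.add)
next
  case (base v)
  then obtain \<mu> where \<mu>: "Qplus N g R' \<mu>" "v \<in> weight_space N g m \<rho> (\<lambda>H. lam H - \<mu> H)" by blast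
  have "v \<in> vec_span m (fst ` {p \<in> monomials. snd p levi_grading = lam levi_grading})"
    using monomial_span_eigen[OF levi_grading_cartan] \<mu>(2) levi_grading_cartan Qplus_levi_grading_zero[OF \<mu>(1)]
    by (auto simp: weight_space_def)
  moreover have "fst ` {p \<in> monomials. snd p levi_grading = lam levi_grading}
      \<subseteq> cyclic_sub m \<rho> (levi N g R') w"
    using monomial_levi_grading by fastforce
  ultimately show ?case
    by (induction rule: vec_span.induct) (auto intro: cyclic_sub.intros)
qed

theorem levi_cyclic_eq_weight_sum: "cyclic_sub m \<rho> (levi N g R') w = weight_sum"
  using levi_cyclic_le_levi_lowering levi_lowering_le_weight_sum weight_sum_le_levi_cyclic by blast

end

section \<open>The classical Lie algebras\<close>

definition adjacent_pos :: "nat \<Rightarrow> nat \<Rightarrow> nat \<Rightarrow> bool" where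
  "adjacent_pos N a b \<longleftrightarrow> b = Suc a \<and> Suc a < N"

lemma eps_diff_split: "eps_diff a b H = eps_diff a c H + eps_diff c b H"
  by (simp add: eps_diff_def)

text \<open>When every \<open>\<epsilon>\<^sub>a - \<epsilon>\<^sub>b\<close> with \<open>a < b\<close> is a root, \<open>\<epsilon>\<^sub>a - \<epsilon>\<^sub>b = (\<epsilon>\<^sub>a - \<epsilon>\<^sub>b\<^sub>-\<^sub>1) + (\<epsilon>\<^sub>b\<^sub>-\<^sub>1 - \<epsilon>\<^sub>b)\<close>.\<close>
lemma adjacent_pos_decomp:
  assumes all: "\<And>a b. a < b \<Longrightarrow> b < N \<Longrightarrow> pos_root_index N g a b"
    and ab: "pos_root_index N g a b"
  shows "adjacent_pos N a b \<or> (\<exists>c d e f. pos_root_index N g c d \<and> adjacent_pos N e f \<and> d - c < b - a \<and>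
      agree_on_cartan N g (eps_diff a b) (\<lambda>H. eps_diff c d H + eps_diff e f H))"
proof (cases "b = Suc a")
  case False
  have "a < b" "b < N" using ab by (auto simp: pos_root_index_def)
  then show ?thesis
    using False all[of a "b - 1"] eps_diff_split[of a b _ "b - 1"]
    by (intro disjI2 exI[of _ a] exI[of _ "b - 1"] exI[of _ "b - 1"] exI[of _ b])
      (auto simp: agree_on_cartan_def adjacent_pos_def)
qed (use ab in \<open>auto simp: adjacent_pos_def pos_root_index_def\<close>)

subsection \<open>Type A\<close>

definition elem_mat :: "nat \<Rightarrow> nat \<Rightarrow> nat \<Rightarrow> complex mat" where
  "elem_mat N a b = mat N N (\<lambda>(i,j). if i = a \<and> j = b then 1 else 0)"

lemma sl_alg_iff: "X \<in> sl_alg N \<longleftrightarrow> X \<in> carrier_mat N N \<and> (\<Sum>i<N. X $$ (i,i)) = 0"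
  by (auto simp: sl_alg_def mtrace_def)

lemma trace_mult_comm:
  fixes X Y :: "complex mat"
  assumes X: "X \<in> carrier_mat N N" and Y: "Y \<in> carrier_mat N N"
  shows "(\<Sum>i<N. (X * Y) $$ (i,i)) = (\<Sum>i<N. (Y * X) $$ (i,i))"
proof -
  have "(\<Sum>i<N. (X * Y) $$ (i,i)) = (\<Sum>i<N. \<Sum>k<N. Y $$ (k,i) * X $$ (i,k))"
    using index_mult_mat_sum[OF X Y] by (simp add: mult.commute)
  also have "\<dots> = (\<Sum>k<N. \<Sum>i<N. Y $$ (k,i) * X $$ (i,k))" by (rule sum.swap)
  also have "\<dots> = (\<Sum>k<N. (Y * X) $$ (k,k))" using index_mult_mat_sum[OF Y X] by simp
  finally show ?thesis .
qed

lemma sl_alg_lie_br: "X \<in> sl_alg N \<Longrightarrow> Y \<in> sl_alg N \<Longrightarrow> lie_br X Y \<in> sl_alg N"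
  unfolding sl_alg_iff using trace_mult_comm by (auto simp: lie_br_def sum_subtractf)

lemma height_elem_sl_alg: "height_elem N \<in> sl_alg N"
proof -
  have double_sum: "2 * (\<Sum>i<n. of_nat i :: complex) = of_nat n * (of_nat n - 1)" for n
    by (induction n) (auto simp: algebra_simps)
  have "(\<Sum>i<N. ((of_nat N - 1) / 2 - of_nat i :: complex)) =
      of_nat N * (of_nat N - 1) / 2 - (\<Sum>i<N. of_nat i)"
    by (simp add: sum_subtractf)
  also have "\<dots> = 0" using double_sum[of N] by (simp add: field_simps)
  finally have "(\<Sum>i<N. ((of_nat N - 1) / 2 - of_nat i :: complex)) = 0" .
  then show ?thesis by (auto simp: sl_alg_iff height_elem_def)
qed

lemma sl_pos_root_index: "a < b \<Longrightarrow> b < N \<Longrightarrow> pos_root_index N (sl_alg N) a b"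
  unfolding pos_root_index_def
  by (intro conjI bexI[of _ "elem_mat N a b"]) (auto simp: sl_alg_iff elem_mat_def intro!: sum.neutral)

text \<open>Prescribed differences \<open>t\<^sub>k\<close> of consecutive diagonal entries: take partial sums and subtract their
  mean to make the trace vanish.\<close>
lemma sl_simple_coweight:
  assumes "N \<ge> 2"
  shows "\<exists>H \<in> cartan N (sl_alg N). \<forall>a b. adjacent_pos N a b \<longrightarrow> eps_diff a b H = (if P a b then 0 else 1)"
proof -
  define t where "t k = (if P k (Suc k) then 0 else 1 :: complex)" for k
  define s where "s i = (\<Sum>k<i. t k)" for i
  define c where "c = (\<Sum>i<N. s i) / of_nat N"
  define H where "H = mat N N (\<lambda>(i,j). if i = j then c - s i else 0)"
  have "(\<Sum>i<N. c - s i) = 0" using assms by (simp add: sum_subtractf c_def)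
  then have "H \<in> cartan N (sl_alg N)" by (auto simp: H_def cartan_def sl_alg_iff)
  moreover have "\<forall>a b. adjacent_pos N a b \<longrightarrow> eps_diff a b H = (if P a b then 0 else 1)"
    by (auto simp: adjacent_pos_def H_def eps_diff_def s_def t_def)
  ultimately show ?thesis by blast
qed

lemma sl_std:
  assumes "N \<ge> 2"
  shows "std_matrix_lie_algebra N (sl_alg N) (adjacent_pos N)"
proof
  fix Y a b assume Y: "Y \<in> sl_alg N" and ab: "a < N" "b < N" "a \<noteq> b"
  let ?C = "Y $$ (a,b) \<cdot>\<^sub>m elem_mat N a b"
  have "?C \<in> sl_alg N" using ab by (auto simp: sl_alg_iff elem_mat_def intro!: sum.neutral)
  moreover have "\<forall>i<N. \<forall>j<N. ?C $$ (i,j) \<noteq> 0 \<longrightarrow> agree_on_cartan N (sl_alg N) (eps_diff i j) (eps_diff a b)"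
    by (auto simp: elem_mat_def agree_on_cartan_def)
  ultimately show "\<exists>C \<in> sl_alg N. C $$ (a,b) = Y $$ (a,b) \<and>
      (\<forall>i<N. \<forall>j<N. C $$ (i,j) = 0 \<or> C $$ (i,j) = Y $$ (i,j)) \<and>
      (\<forall>i<N. \<forall>j<N. C $$ (i,j) \<noteq> 0 \<longrightarrow> agree_on_cartan N (sl_alg N) (eps_diff i j) (eps_diff a b))"
    using ab by (intro bexI[of _ ?C]) (auto simp: elem_mat_def)
qed (use assms sl_alg_lie_br height_elem_sl_alg sl_pos_root_index adjacent_pos_decomp sl_simple_coweight in
  \<open>auto simp: sl_alg_iff upper_part_def diag_part_def sum.distrib sum_distrib_left[symmetric]
    adjacent_pos_def\<close>)

subsection \<open>Types B, C, D\<close>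

lemma flip_flip: "a < (N::nat) \<Longrightarrow> N - 1 - (N - 1 - a) = a"
  by arith

lemma flip_pair_eq_iff:
  "i < N \<Longrightarrow> j < N \<Longrightarrow> x < N \<Longrightarrow> y < (N::nat) \<Longrightarrow>
    ((N - 1 - j, N - 1 - i) = (x, y)) = ((i, j) = (N - 1 - y, N - 1 - x))"
  by auto

lemma sum_flip: "(\<Sum>k<(N::nat). f k) = (\<Sum>l<N. f (N - 1 - l))"
  by (rule sum.reindex_bij_witness[where i="\<lambda>l. N - 1 - l" and j="\<lambda>l. N - 1 - l"]) (auto simp: flip_flip)

definition antidiag_mat :: "nat \<Rightarrow> (nat \<Rightarrow> complex) \<Rightarrow> complex mat" where
  "antidiag_mat N s = mat N N (\<lambda>(i,j). if i + j = N - 1 then s i else 0)"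

lemma antidiag_mat_gram_entry:
  assumes X: "X \<in> carrier_mat N N" and ab: "a < N" "b < N"
  shows "(X\<^sup>T * antidiag_mat N s + antidiag_mat N s * X) $$ (a,b) =
    s (N - 1 - b) * X $$ (N - 1 - b, a) + s a * X $$ (N - 1 - a, b)"
proof -
  have J: "antidiag_mat N s \<in> carrier_mat N N" by (simp add: antidiag_mat_def)
  have "(X\<^sup>T * antidiag_mat N s) $$ (a,b) = (\<Sum>k<N. X\<^sup>T $$ (a,k) * antidiag_mat N s $$ (k,b))"
    using index_mult_mat_sum[of "X\<^sup>T" N N "antidiag_mat N s"] X J ab by simp
  also have "\<dots> = (\<Sum>k<N. if k = N - 1 - b then s k * X $$ (k,a) else 0)"
    using X ab by (intro sum.cong refl) (auto simp: antidiag_mat_def)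
  finally have 1: "(X\<^sup>T * antidiag_mat N s) $$ (a,b) = s (N - 1 - b) * X $$ (N - 1 - b, a)"
    using ab by (simp add: sum.delta)
  have "(antidiag_mat N s * X) $$ (a,b) = (\<Sum>k<N. antidiag_mat N s $$ (a,k) * X $$ (k,b))"
    using index_mult_mat_sum[OF J X ab] .
  also have "\<dots> = (\<Sum>k<N. if k = N - 1 - a then s a * X $$ (k,b) else 0)"
    using X ab by (intro sum.cong refl) (auto simp: antidiag_mat_def)
  finally have 2: "(antidiag_mat N s * X) $$ (a,b) = s a * X $$ (N - 1 - a, b)"
    using ab by (simp add: sum.delta)
  show ?thesis using 1 2 X J ab by simp
qed

lemma antidiag_mat_gram_zero_iff:
  assumes "X \<in> carrier_mat N N"
  shows "X\<^sup>T * antidiag_mat N s + antidiag_mat N s * X = 0\<^sub>m N N \<longleftrightarrow>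
    (\<forall>a<N. \<forall>b<N. s (N - 1 - b) * X $$ (N - 1 - b, a) + s a * X $$ (N - 1 - a, b) = 0)"
  (is "?zero \<longleftrightarrow> ?entries")
proof
  assume zero: ?zero
  show ?entries
  proof (intro allI impI)
    fix a b assume ab: "a < N" "b < N"
    have "(X\<^sup>T * antidiag_mat N s + antidiag_mat N s * X) $$ (a,b) = 0" using zero ab by simp
    then show "s (N - 1 - b) * X $$ (N - 1 - b, a) + s a * X $$ (N - 1 - a, b) = 0"
      using antidiag_mat_gram_entry[OF assms ab] by simp
  qed
next
  assume ?entries
  then show ?zero
    using antidiag_mat_gram_entry[OF assms, of _ _ s] assms by (intro eq_matI) (auto simp: antidiag_mat_def)
qed

text \<open>The Lie algebra of the form with Gram matrix \<open>antidiag_mat N s\<close>, written entrywise: the condition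
  \<open>X\<^sup>T J + J X = 0\<close> relates each entry to its mirror image in the antidiagonal.\<close>
definition form_alg :: "nat \<Rightarrow> (nat \<Rightarrow> complex) \<Rightarrow> complex mat set" where
  "form_alg N s = {X \<in> carrier_mat N N.
     \<forall>i<N. \<forall>j<N. X $$ (N - 1 - j, N - 1 - i) = - (s i * s j) * X $$ (i,j)}"

text \<open>Signs \<open>s\<close> with \<open>s (N - 1 - i) = c * s i\<close>: the form is symmetric for \<open>c = 1\<close> and alternating
  for \<open>c = -1\<close>.\<close>
locale antidiag_form =
  fixes N :: nat and s :: "nat \<Rightarrow> complex" and c :: complex
  assumes sign_sq: "s i * s i = 1"
    and sign_flip: "i < N \<Longrightarrow> s (N - 1 - i) * s i = c"
    and c_sq: "c * c = 1"
begin

abbreviation "G \<equiv> form_alg N s"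

lemma form_alg_iff: "X \<in> G \<longleftrightarrow> X \<in> carrier_mat N N \<and>
    (\<forall>i<N. \<forall>j<N. X $$ (N - 1 - j, N - 1 - i) = - (s i * s j) * X $$ (i,j))"
  by (simp add: form_alg_def)

lemma sign_flip_eq: "i < N \<Longrightarrow> s (N - 1 - i) = c * s i"
  using sign_flip[of i] sign_sq[of i] by (metis mult.assoc mult.commute mult_1)

lemma flip_condition_iff:
  "(\<forall>a<N. \<forall>b<N. s (N - 1 - b) * X $$ (N - 1 - b, a) + s a * X $$ (N - 1 - a, b) = 0) \<longleftrightarrow>
    (\<forall>i<N. \<forall>j<N. X $$ (N - 1 - j, N - 1 - i) = - (s i * s j) * X $$ (i,j))"
proof (intro iffI allI impI)
  fix i j assume h: "\<forall>a<N. \<forall>b<N. s (N - 1 - b) * X $$ (N - 1 - b, a) + s a * X $$ (N - 1 - a, b) = 0"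
    and ij: "i < N" "j < N"
  have "c * s j * X $$ (N - 1 - j, N - 1 - i) + c * s i * X $$ (i,j) = 0"
    using h[rule_format, of "N - 1 - i" j] ij sign_flip_eq[of i] sign_flip_eq[of j] by (simp add: flip_flip)
  have "(c * c) * (s j * s j) * X $$ (N - 1 - j, N - 1 - i) + (c * c) * (s i * s j * X $$ (i,j)) =
      c * s j * (c * s j * X $$ (N - 1 - j, N - 1 - i) + c * s i * X $$ (i,j))"
    by (simp add: algebra_simps)
  also have "\<dots> = 0" using \<open>c * s j * _ + _ = 0\<close> by simp
  finally have "X $$ (N - 1 - j, N - 1 - i) + s i * s j * X $$ (i,j) = 0"
    using c_sq sign_sq[of j] by simp
  then show "X $$ (N - 1 - j, N - 1 - i) = - (s i * s j) * X $$ (i,j)"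
    by (simp add: add_eq_0_iff2)
next
  fix a b assume h: "\<forall>i<N. \<forall>j<N. X $$ (N - 1 - j, N - 1 - i) = - (s i * s j) * X $$ (i,j)"
    and ab: "a < N" "b < N"
  have "X $$ (N - 1 - b, a) = - (s (N - 1 - a) * s b) * X $$ (N - 1 - a, b)"
    using h[rule_format, of "N - 1 - a" b] ab by (simp add: flip_flip)
  then show "s (N - 1 - b) * X $$ (N - 1 - b, a) + s a * X $$ (N - 1 - a, b) = 0"
    using ab c_sq sign_sq[of b] sign_flip_eq[of a] sign_flip_eq[of b] by (simp add: algebra_simps)
qed

lemma antidiag_form_alg_eq:
  "{X \<in> carrier_mat N N. X\<^sup>T * antidiag_mat N s + antidiag_mat N s * X = 0\<^sub>m N N} = G"
  using antidiag_mat_gram_zero_iff flip_condition_iff unfolding form_alg_def by blast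

lemma form_alg_mult_flip:
  assumes X: "X \<in> G" and Y: "Y \<in> G" and ij: "i < N" "j < N"
  shows "(X * Y) $$ (N - 1 - j, N - 1 - i) = s i * s j * (Y * X) $$ (i,j)"
proof -
  have XC: "X \<in> carrier_mat N N" and YC: "Y \<in> carrier_mat N N" using X Y by (auto simp: form_alg_iff)
  have "(X * Y) $$ (N - 1 - j, N - 1 - i) = (\<Sum>k<N. X $$ (N - 1 - j, k) * Y $$ (k, N - 1 - i))"
    using index_mult_mat_sum[OF XC YC] ij by simp
  also have "\<dots> = (\<Sum>l<N. X $$ (N - 1 - j, N - 1 - l) * Y $$ (N - 1 - l, N - 1 - i))"
    by (rule sum_flip)
  also have "\<dots> = (\<Sum>l<N. s i * s j * (Y $$ (i,l) * X $$ (l,j)))"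
  proof (rule sum.cong[OF refl])
    fix l assume "l \<in> {..<N}"
    then have l: "l < N" by simp
    have "X $$ (N - 1 - j, N - 1 - l) = - (s l * s j) * X $$ (l,j)" using X l ij by (auto simp: form_alg_iff)
    moreover have "Y $$ (N - 1 - l, N - 1 - i) = - (s i * s l) * Y $$ (i,l)" using Y l ij by (auto simp: form_alg_iff)
    ultimately have "X $$ (N - 1 - j, N - 1 - l) * Y $$ (N - 1 - l, N - 1 - i) =
        (s l * s l) * s i * s j * (Y $$ (i,l) * X $$ (l,j))"
      by (simp add: algebra_simps)
    then show "X $$ (N - 1 - j, N - 1 - l) * Y $$ (N - 1 - l, N - 1 - i) = s i * s j * (Y $$ (i,l) * X $$ (l,j))"
      using sign_sq by simp
  qed
  also have "\<dots> = s i * s j * (Y * X) $$ (i,j)"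
    using index_mult_mat_sum[OF YC XC ij] by (simp add: sum_distrib_left)
  finally show ?thesis .
qed

lemma form_alg_lie_br:
  assumes X: "X \<in> G" and Y: "Y \<in> G"
  shows "lie_br X Y \<in> G"
proof -
  have XC: "X \<in> carrier_mat N N" and YC: "Y \<in> carrier_mat N N" using X Y by (auto simp: form_alg_iff)
  have "lie_br X Y $$ (N - 1 - j, N - 1 - i) = - (s i * s j) * lie_br X Y $$ (i,j)"
    if ij: "i < N" "j < N" for i j
  proof -
    have "lie_br X Y $$ (N - 1 - j, N - 1 - i) = (X * Y) $$ (N - 1 - j, N - 1 - i) - (Y * X) $$ (N - 1 - j, N - 1 - i)"
      using XC YC ij by (simp add: lie_br_def)
    also have "\<dots> = - (s i * s j) * ((X * Y) $$ (i,j) - (Y * X) $$ (i,j))"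
      unfolding form_alg_mult_flip[OF X Y ij] form_alg_mult_flip[OF Y X ij] by (simp add: algebra_simps)
    also have "(X * Y) $$ (i,j) - (Y * X) $$ (i,j) = lie_br X Y $$ (i,j)"
      using XC YC ij by (simp add: lie_br_def)
    finally show ?thesis .
  qed
  then show ?thesis using XC YC by (auto simp: form_alg_iff lie_br_def)
qed

lemma cartan_flip:
  assumes "H \<in> cartan N G" "i < N"
  shows "H $$ (N - 1 - i, N - 1 - i) = - H $$ (i,i)"
proof -
  have "H $$ (N - 1 - i, N - 1 - i) = - (s i * s i) * H $$ (i,i)"
    using assms by (auto simp: cartan_def form_alg_iff)
  then show ?thesis using sign_sq by simp
qed

lemma diag_mat_cartan:
  "(\<And>i. i < N \<Longrightarrow> d (N - 1 - i) = - d i) \<Longrightarrow> mat N N (\<lambda>(i,j). if i = j then d i else 0) \<in> cartan N G"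
  unfolding cartan_def form_alg_iff using sign_sq by auto

lemma form_alg_root_component:
  assumes Y: "Y \<in> G" and ab: "a < N" "b < N" "a \<noteq> b"
  shows "\<exists>C \<in> G. C $$ (a,b) = Y $$ (a,b) \<and> (\<forall>i<N. \<forall>j<N. C $$ (i,j) = 0 \<or> C $$ (i,j) = Y $$ (i,j)) \<and>
    (\<forall>i<N. \<forall>j<N. C $$ (i,j) \<noteq> 0 \<longrightarrow> agree_on_cartan N G (eps_diff i j) (eps_diff a b))"
proof -
  define S where "S i j \<longleftrightarrow> (i,j) = (a,b) \<or> (i,j) = (N - 1 - b, N - 1 - a)" for i j
  define C where "C = mat N N (\<lambda>(i,j). if S i j then Y $$ (i,j) else 0)"
  have S_flip: "S (N - 1 - j) (N - 1 - i) = S i j" if "i < N" "j < N" for i j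
    using that ab unfolding S_def by auto
  have "C \<in> G" unfolding form_alg_iff
  proof (intro conjI allI impI)
    fix i j assume ij: "i < N" "j < N"
    show "C $$ (N - 1 - j, N - 1 - i) = - (s i * s j) * C $$ (i,j)"
      using S_flip[OF ij] ij Y by (auto simp: C_def form_alg_iff)
  qed (simp add: C_def)
  moreover have "agree_on_cartan N G (eps_diff i j) (eps_diff a b)" if "S i j" for i j
    using that ab cartan_flip unfolding S_def agree_on_cartan_def eps_diff_def by auto
  ultimately show ?thesis
    using ab by (intro bexI[of _ C]) (auto simp: C_def S_def)
qed

lemma form_alg_std:
  assumes "\<And>a b. simple_pos a b \<Longrightarrow> pos_root_index N G a b"
    and "\<And>a b. pos_root_index N G a b \<Longrightarrow> simple_pos a b \<or>
      (\<exists>c d e f. pos_root_index N G c d \<and> simple_pos e f \<and> d - c < b - a \<and>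
        agree_on_cartan N G (eps_diff a b) (\<lambda>H. eps_diff c d H + eps_diff e f H))"
    and "\<And>P. (\<And>a b c d. simple_pos a b \<Longrightarrow> simple_pos c d \<Longrightarrow>
        agree_on_cartan N G (eps_diff a b) (eps_diff c d) \<Longrightarrow> P a b = P c d) \<Longrightarrow>
      \<exists>H \<in> cartan N G. \<forall>a b. simple_pos a b \<longrightarrow> eps_diff a b H = (if P a b then 0 else 1)"
  shows "std_matrix_lie_algebra N G simple_pos"
proof
  show "upper_part N X \<in> G" if "X \<in> G" for X
  proof -
    have "(N - 1 - j < N - 1 - i) = (i < j)" if "i < N" "j < N" for i j using that by auto
    then show ?thesis using \<open>X \<in> G\<close> by (auto simp: form_alg_iff upper_part_def)
  qed
  show "diag_part N X \<in> G" if "X \<in> G" for X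
  proof -
    have "(N - 1 - j = N - 1 - i) = (i = j)" if "i < N" "j < N" for i j using that by auto
    then show ?thesis using \<open>X \<in> G\<close> by (auto simp: form_alg_iff diag_part_def)
  qed
  have "height_elem N \<in> cartan N G" unfolding height_elem_def
    by (rule diag_mat_cartan) (auto simp: of_nat_diff field_simps)
  then show "height_elem N \<in> G" by (simp add: cartan_def)
  show "X + Y \<in> G" if "X \<in> G" "Y \<in> G" for X Y
    using that by (auto simp: form_alg_iff distrib_left)
  show "a \<cdot>\<^sub>m X \<in> G" if "X \<in> G" for X and a :: complex
    using that by (auto simp: form_alg_iff mult.left_commute)
  show "X\<^sup>T \<in> G" if "X \<in> G" for X
    using that by (auto simp: form_alg_iff mult.commute)
qed (use assms form_alg_lie_br form_alg_root_component in \<open>auto simp: form_alg_iff\<close>)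

text \<open>Off the antidiagonal, \<open>e\<^sub>a\<^sub>b - s\<^sub>a s\<^sub>b e\<^bsub>N-1-b,N-1-a\<^esub>\<close> lies in \<open>G\<close>.\<close>
lemma pos_root_index_form:
  assumes "a < b" "b < N" "a + b \<noteq> N - 1"
  shows "pos_root_index N G a b"
proof -
  define E :: "complex mat" where "E = mat N N (\<lambda>(i,j).
    if (i,j) = (a,b) then 1 else if (i,j) = (N - 1 - b, N - 1 - a) then - (s a * s b) else 0)"
  have ne: "(N - 1 - b, N - 1 - a) \<noteq> (a,b)" using assms by auto
  have "E \<in> G" unfolding form_alg_iff
  proof (intro conjI allI impI)
    show "E \<in> carrier_mat N N" by (simp add: E_def)
    fix i j assume ij: "i < N" "j < N"
    consider "(i,j) = (a,b)" | "(i,j) = (N - 1 - b, N - 1 - a)"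
      | "(i,j) \<noteq> (a,b)" "(i,j) \<noteq> (N - 1 - b, N - 1 - a)"
      by blast
    then show "E $$ (N - 1 - j, N - 1 - i) = - (s i * s j) * E $$ (i,j)"
    proof cases
      case 1 then show ?thesis using ij ne by (auto simp: E_def)
    next
      case 2
      have "s (N - 1 - b) * s b = c" "s (N - 1 - a) * s a = c" using sign_flip assms by auto
      then have one: "s (N - 1 - b) * s (N - 1 - a) * (s a * s b) = 1" using c_sq
        by (metis mult.assoc mult.left_commute)
      have i: "i = N - 1 - b" and j: "j = N - 1 - a" using 2 by auto
      have l: "E $$ (N - 1 - j, N - 1 - i) = 1" using i j assms by (simp add: E_def flip_flip)
      have r: "E $$ (i,j) = - (s a * s b)" using i j ne assms by (auto simp: E_def)
      have si: "s i = s (N - 1 - b)" and sj: "s j = s (N - 1 - a)" using i j by auto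
      show ?thesis unfolding l r si sj using one by (simp add: algebra_simps)
    next
      case 3
      have A: "(N - 1 - j, N - 1 - i) \<noteq> (a,b)"
        by (subst flip_pair_eq_iff) (use ij assms 3 in auto)
      have B: "(N - 1 - j, N - 1 - i) \<noteq> (N - 1 - b, N - 1 - a)"
        by (subst flip_pair_eq_iff) (use ij assms 3 flip_flip in auto)
      have Eval: "\<And>x y. x < N \<Longrightarrow> y < N \<Longrightarrow> E $$ (x,y) =
          (if (x,y) = (a,b) then 1 else if (x,y) = (N - 1 - b, N - 1 - a) then - (s a * s b) else 0)"
        by (simp add: E_def)
      have e1: "N - 1 - j < N" "N - 1 - i < N" using ij by auto
      have "E $$ (N - 1 - j, N - 1 - i) = 0" using Eval[OF e1, unfolded if_not_P[OF A] if_not_P[OF B]] .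
      moreover have "E $$ (i,j) = 0" using Eval[OF ij, unfolded if_not_P[OF 3(1)] if_not_P[OF 3(2)]] .
      ultimately show ?thesis by simp
    qed
  qed
  moreover have "E $$ (a,b) = 1" using assms by (simp add: E_def)
  ultimately show ?thesis unfolding pos_root_index_def using assms by (intro conjI bexI[of _ E]) auto
qed

text \<open>On the antidiagonal of an alternating form, \<open>e\<^bsub>a,N-1-a\<^esub>\<close> itself lies in \<open>G\<close>.\<close>
lemma pos_root_index_antidiag:
  assumes c: "c = -1" and a: "a < N - 1 - a"
  shows "pos_root_index N G a (N - 1 - a)"
proof -
  define E :: "complex mat" where "E = mat N N (\<lambda>(i,j). if (i,j) = (a, N - 1 - a) then 1 else 0)"
  have aN: "a < N" using a by auto
  have "E \<in> G" unfolding form_alg_iff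
  proof (intro conjI allI impI)
    show "E \<in> carrier_mat N N" by (simp add: E_def)
    fix i j assume ij: "i < N" "j < N"
    show "E $$ (N - 1 - j, N - 1 - i) = - (s i * s j) * E $$ (i,j)"
    proof (cases "(i,j) = (a, N - 1 - a)")
      case True
      have "s (N - 1 - a) * s a = c" using sign_flip aN by auto
      then have sa: "s a * s (N - 1 - a) = -1" using c by (simp add: mult.commute)
      have l: "E $$ (N - 1 - j, N - 1 - i) = 1" using True aN by (simp add: E_def flip_flip)
      have r: "E $$ (i,j) = 1" using True aN by (simp add: E_def)
      have si: "s i = s a" and sj: "s j = s (N - 1 - a)" using True by auto
      show ?thesis unfolding l r si sj sa by simp
    next
      case False
      have A: "(N - 1 - j, N - 1 - i) \<noteq> (a, N - 1 - a)"
        by (subst flip_pair_eq_iff) (use ij aN False flip_flip in auto)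
      have Eval: "\<And>x y. x < N \<Longrightarrow> y < N \<Longrightarrow> E $$ (x,y) = (if (x,y) = (a, N - 1 - a) then 1 else 0)"
        by (simp add: E_def)
      have e1: "N - 1 - j < N" "N - 1 - i < N" using ij by auto
      have "E $$ (N - 1 - j, N - 1 - i) = 0" using Eval[OF e1, unfolded if_not_P[OF A]] .
      moreover have "E $$ (i,j) = 0" using Eval[OF ij, unfolded if_not_P[OF False]] .
      ultimately show ?thesis by simp
    qed
  qed
  moreover have "E $$ (a, N - 1 - a) = 1" using aN by (simp add: E_def)
  ultimately show ?thesis unfolding pos_root_index_def using a by (intro conjI bexI[of _ E]) auto
qed

lemma not_pos_root_index_antidiag:
  assumes "c = 1" and "pos_root_index N G a b"
  shows "a + b \<noteq> N - 1"
proof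
  assume anti: "a + b = N - 1"
  obtain X where X: "X \<in> G" "X $$ (a,b) \<noteq> 0" and ab: "a < b" "b < N"
    using assms(2) by (auto simp: pos_root_index_def)
  have ba: "b = N - 1 - a" "N - 1 - b = a" using anti ab by auto
  have "X $$ (N - 1 - b, N - 1 - a) = - (s a * s b) * X $$ (a,b)" using X ab by (auto simp: form_alg_iff)
  moreover have "s a * s b = 1" using sign_flip[of a] ab assms(1) ba by (simp add: mult.commute)
  ultimately have "X $$ (a,b) = - X $$ (a,b)" using ba by simp
  then show False using X(2) by simp
qed

lemma adjacent_flip_agree:
  assumes "Suc k < N"
  shows "agree_on_cartan N G (eps_diff k (Suc k)) (eps_diff (N - 2 - k) (N - 1 - k))"
proof -
  have "N - 2 - k = N - 1 - Suc k" by simp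
  then show ?thesis
    using cartan_flip[of _ k] cartan_flip[of _ "Suc k"] assms
    by (auto simp: agree_on_cartan_def eps_diff_def)
qed

end

definition sp_sign :: "nat \<Rightarrow> nat \<Rightarrow> complex" where
  "sp_sign n i = (if i < n then 1 else -1)"

lemma antidiag_form_so: "antidiag_form N (\<lambda>_. 1) 1"
  by unfold_locales auto

lemma antidiag_form_sp: "antidiag_form (2 * n) (sp_sign n) (-1)"
  by unfold_locales (auto simp: sp_sign_def)

lemma so_alg_eq_form_alg: "so_alg N = form_alg N (\<lambda>_. 1)"
proof -
  interpret antidiag_form N "\<lambda>_. 1" 1 by (rule antidiag_form_so)
  have "J_orth N = antidiag_mat N (\<lambda>_. 1)" by (simp add: J_orth_def antidiag_mat_def)
  then show ?thesis using antidiag_form_alg_eq by (simp add: so_alg_def)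
qed

lemma sp_alg_eq_form_alg: "sp_alg n = form_alg (2 * n) (sp_sign n)"
proof -
  interpret antidiag_form "2 * n" "sp_sign n" "-1" by (rule antidiag_form_sp)
  have "J_symp n = antidiag_mat (2 * n) (sp_sign n)"
    unfolding J_symp_def antidiag_mat_def sp_sign_def by (rule refl)
  then show ?thesis using antidiag_form_alg_eq by (simp add: sp_alg_def)
qed

definition mirror_diag :: "nat \<Rightarrow> (nat \<Rightarrow> complex) \<Rightarrow> complex mat" where
  "mirror_diag N L = mat N N (\<lambda>(i,j). if i = j then
     (if i < N div 2 then L i else if N - 1 - i < N div 2 then - L (N - 1 - i) else 0) else 0)"

lemma mirror_diag_entry: "i < N \<Longrightarrow> mirror_diag N L $$ (i,i) =
    (if i < N div 2 then L i else if N - 1 - i < N div 2 then - L (N - 1 - i) else 0)"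
  by (simp add: mirror_diag_def)

lemma mirror_diag_spin:
  assumes "N = 2 * n" "n \<ge> 2"
  shows "eps_diff (n - 2) n (mirror_diag N L) = L (n - 2) + L (n - 1)"
    and "eps_diff (n - 1) (Suc n) (mirror_diag N L) = L (n - 2) + L (n - 1)"
proof -
  have "N - 1 - n = n - 1" "N - 1 - Suc n = n - 2" "N div 2 = n" using assms by auto
  then show "eps_diff (n - 2) n (mirror_diag N L) = L (n - 2) + L (n - 1)"
    and "eps_diff (n - 1) (Suc n) (mirror_diag N L) = L (n - 2) + L (n - 1)"
    using assms by (simp_all add: eps_diff_def mirror_diag_entry)
qed

text \<open>\<open>L\<^sub>i = B + t\<^sub>i + \<dots> + t\<^sub>n\<^sub>-\<^sub>2\<close>, so that consecutive differences are the \<open>t\<^sub>i\<close>.\<close>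
definition tail_sum :: "nat \<Rightarrow> complex \<Rightarrow> (nat \<Rightarrow> complex) \<Rightarrow> nat \<Rightarrow> complex" where
  "tail_sum n B t i = B + (\<Sum>k \<in> {i..<n - 1}. t k)"

lemma tail_sum_step: "Suc i < n \<Longrightarrow> tail_sum n B t i - tail_sum n B t (Suc i) = t i"
  by (simp add: tail_sum_def sum.atLeast_Suc_lessThan)

context antidiag_form
begin

lemma mirror_diag_cartan: "mirror_diag N L \<in> cartan N G"
  unfolding mirror_diag_def by (rule diag_mat_cartan) (auto simp: flip_flip)

text \<open>Upper-half adjacent roots are mirror images of lower-half ones, so a coweight built on the lower
  half automatically takes the right values on the upper half.\<close>
lemma mirror_diag_upper_half:
  assumes a: "Suc a < N" "N div 2 \<le> a" and d: "Suc (N - 2 - a) < N div 2"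
    and inv: "P (N - 2 - a) (N - 1 - a) = P a (Suc a)"
    and lower: "eps_diff (N - 2 - a) (N - 1 - a) (mirror_diag N L) =
      (if P (N - 2 - a) (Suc (N - 2 - a)) then 0 else 1)"
  shows "eps_diff a (Suc a) (mirror_diag N L) = (if P a (Suc a) then 0 else 1)"
proof -
  have "Suc (N - 2 - a) = N - 1 - a" using a by simp
  then show ?thesis
    using adjacent_flip_agree[OF a(1)] mirror_diag_cartan lower inv
    by (auto simp: agree_on_cartan_def)
qed

end

subsubsection \<open>Type C\<close>

lemma sp_pos_root_index:
  assumes "a < b" "b < 2 * n"
  shows "pos_root_index (2 * n) (form_alg (2 * n) (sp_sign n)) a b"
proof -
  interpret antidiag_form "2 * n" "sp_sign n" "-1" by (rule antidiag_form_sp)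
  show ?thesis
  proof (cases "a + b = 2 * n - 1")
    case True
    then have "b = 2 * n - 1 - a" "a < 2 * n - 1 - a" using assms by auto
    then show ?thesis using pos_root_index_antidiag[of a] by simp
  qed (use assms pos_root_index_form in auto)
qed

lemma sp_simple_coweight:
  assumes n: "n \<ge> 1"
    and inv: "\<And>a b c d. adjacent_pos (2 * n) a b \<Longrightarrow> adjacent_pos (2 * n) c d \<Longrightarrow>
      agree_on_cartan (2 * n) (form_alg (2 * n) (sp_sign n)) (eps_diff a b) (eps_diff c d) \<Longrightarrow> P a b = P c d"
  shows "\<exists>H \<in> cartan (2 * n) (form_alg (2 * n) (sp_sign n)).
    \<forall>a b. adjacent_pos (2 * n) a b \<longrightarrow> eps_diff a b H = (if P a b then 0 else 1)"
proof -
  interpret antidiag_form "2 * n" "sp_sign n" "-1" by (rule antidiag_form_sp)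
  define t where "t k = (if P k (Suc k) then 0 else 1 :: complex)" for k
  define H where "H = mirror_diag (2 * n) (tail_sum n (t (n - 1) / 2) t)"
  have lower: "eps_diff a (Suc a) H = t a" if "Suc a < 2 * n" "a < n" for a
  proof (cases "Suc a < n")
    case True
    then show ?thesis using tail_sum_step[OF True] by (simp add: H_def eps_diff_def mirror_diag_entry)
  next
    case False
    then have "a = n - 1" "2 * n - 1 - Suc a = n - 1" using that by auto
    then show ?thesis using that by (simp add: H_def eps_diff_def mirror_diag_entry tail_sum_def)
  qed
  have "eps_diff a (Suc a) H = t a" if a: "Suc a < 2 * n" for a
  proof (cases "a < n")
    case False
    have "Suc (2 * n - 2 - a) = 2 * n - 1 - a" using a by simp
    then have "P (2 * n - 2 - a) (2 * n - 1 - a) = P a (Suc a)"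
      using inv[of a "Suc a" "2 * n - 2 - a" "2 * n - 1 - a"] adjacent_flip_agree[OF a] a
      by (simp add: adjacent_pos_def)
    then show ?thesis
      using mirror_diag_upper_half[of a P] lower[of "2 * n - 2 - a"] a False
      by (auto simp: H_def t_def Suc_diff_Suc)
  qed (use lower a in auto)
  then show ?thesis
    using mirror_diag_cartan by (intro bexI[of _ H]) (auto simp: adjacent_pos_def t_def H_def)
qed

lemma sp_std:
  assumes "n \<ge> 1"
  shows "std_matrix_lie_algebra (2 * n) (sp_alg n) (adjacent_pos (2 * n))"
proof -
  interpret antidiag_form "2 * n" "sp_sign n" "-1" by (rule antidiag_form_sp)
  show ?thesis unfolding sp_alg_eq_form_alg
    by (rule form_alg_std)
      (use assms sp_pos_root_index adjacent_pos_decomp sp_simple_coweight in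
        \<open>auto simp: adjacent_pos_def\<close>)
qed

subsubsection \<open>Type B\<close>

lemma so_pos_root_index:
  "a < b \<Longrightarrow> b < N \<Longrightarrow> a + b \<noteq> N - 1 \<Longrightarrow> pos_root_index N (form_alg N (\<lambda>_. 1)) a b"
  using antidiag_form.pos_root_index_form[OF antidiag_form_so] by blast

lemma so_pos_root_index_not_antidiag:
  "pos_root_index N (form_alg N (\<lambda>_. 1)) a b \<Longrightarrow> a + b \<noteq> N - 1"
  using antidiag_form.not_pos_root_index_antidiag[OF antidiag_form_so] by blast

text \<open>Outside the antidiagonal, \<open>\<epsilon>\<^sub>a - \<epsilon>\<^sub>b\<close> splits off the simple root at \<open>(b - 1, b)\<close>, or at
  \<open>(a, a + 1)\<close> when \<open>(a, b - 1)\<close> lies on the antidiagonal.\<close>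
lemma so_odd_decomp:
  assumes N: "N = 2 * n + 1" and ab: "pos_root_index N (form_alg N (\<lambda>_. 1)) a b"
  shows "adjacent_pos N a b \<or> (\<exists>c d e f. pos_root_index N (form_alg N (\<lambda>_. 1)) c d \<and>
    adjacent_pos N e f \<and> d - c < b - a \<and>
    agree_on_cartan N (form_alg N (\<lambda>_. 1)) (eps_diff a b) (\<lambda>H. eps_diff c d H + eps_diff e f H))"
proof -
  have lt: "a < b" "b < N" using ab by (auto simp: pos_root_index_def)
  have anti: "a + b \<noteq> N - 1" using so_pos_root_index_not_antidiag[OF ab] .
  consider "b = Suc a" | "b \<noteq> Suc a" "a + (b - 1) \<noteq> N - 1" | "b \<noteq> Suc a" "a + (b - 1) = N - 1" by blast
  then show ?thesis
  proof cases
    case 1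
    then show ?thesis using lt by (simp add: adjacent_pos_def)
  next
    case 2
    then show ?thesis
      using lt so_pos_root_index[of a "b - 1" N] eps_diff_split[of a b _ "b - 1"] N
      by (intro disjI2 exI[of _ a] exI[of _ "b - 1"] exI[of _ "b - 1"] exI[of _ b])
        (auto simp: agree_on_cartan_def adjacent_pos_def)
  next
    case 3
    then have "Suc a < b" "Suc a + b \<noteq> N - 1" using lt anti by auto
    then show ?thesis
      using lt so_pos_root_index[of "Suc a" b N] eps_diff_split[of a b _ "Suc a"] N
      by (intro disjI2 exI[of _ "Suc a"] exI[of _ b] exI[of _ a] exI[of _ "Suc a"])
        (auto simp: agree_on_cartan_def adjacent_pos_def)
  qed
qed

lemma so_odd_simple_coweight:
  assumes N: "N = 2 * n + 1" and n: "n \<ge> 1"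
    and inv: "\<And>a b c d. adjacent_pos N a b \<Longrightarrow> adjacent_pos N c d \<Longrightarrow>
      agree_on_cartan N (form_alg N (\<lambda>_. 1)) (eps_diff a b) (eps_diff c d) \<Longrightarrow> P a b = P c d"
  shows "\<exists>H \<in> cartan N (form_alg N (\<lambda>_. 1)).
    \<forall>a b. adjacent_pos N a b \<longrightarrow> eps_diff a b H = (if P a b then 0 else 1)"
proof -
  interpret antidiag_form N "\<lambda>_. 1" 1 by (rule antidiag_form_so)
  define t where "t k = (if P k (Suc k) then 0 else 1 :: complex)" for k
  define L where "L = tail_sum n (t (n - 1)) t"
  define H where "H = mirror_diag N L"
  have half: "N div 2 = n" using N by simp
  have Ln: "L (n - 1) = t (n - 1)" by (simp add: L_def tail_sum_def)
  have lower: "eps_diff a (Suc a) H = t a" if "a < n" for a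
  proof (cases "Suc a < n")
    case True
    then show ?thesis
      using tail_sum_step[OF True] half by (simp add: H_def L_def eps_diff_def mirror_diag_entry)
  next
    case False
    then have "a = n - 1" using that by simp
    then show ?thesis using Ln half N n by (simp add: H_def eps_diff_def mirror_diag_entry)
  qed
  have "eps_diff a (Suc a) H = t a" if a: "Suc a < N" for a
  proof -
    consider "a < n" | "a = n" | "Suc n \<le> a" by linarith
    then show ?thesis
    proof cases
      case 2
      have "H $$ (a,a) = 0" using 2 a half N by (simp add: H_def mirror_diag_entry)
      moreover have "N - 1 - Suc a = n - 1" using 2 N by simp
      then have "H $$ (Suc a, Suc a) = - L (n - 1)" using 2 a half n by (simp add: H_def mirror_diag_entry)
      ultimately have "eps_diff a (Suc a) H = t (n - 1)" using Ln by (simp add: eps_diff_def)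
      moreover have "P (n - 1) n = P a (Suc a)"
        using inv[of a "Suc a" "n - 1" n] adjacent_flip_agree[OF a] 2 N n
        by (simp add: adjacent_pos_def numeral_2_eq_2)
      ultimately show ?thesis using n by (simp add: t_def)
    next
      case 3
      have "Suc (N - 2 - a) = N - 1 - a" using a by simp
      then have "P (N - 2 - a) (N - 1 - a) = P a (Suc a)"
        using inv[of a "Suc a" "N - 2 - a" "N - 1 - a"] adjacent_flip_agree[OF a] a
        by (simp add: adjacent_pos_def)
      then show ?thesis
        using mirror_diag_upper_half[of a P] lower[of "N - 2 - a"] a 3 half N
        by (auto simp: H_def t_def Suc_diff_Suc)
    qed (use lower in auto)
  qed
  then show ?thesis
    using mirror_diag_cartan by (intro bexI[of _ H]) (auto simp: adjacent_pos_def t_def H_def)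
qed

lemma so_odd_std:
  assumes "N = 2 * n + 1" "n \<ge> 1"
  shows "std_matrix_lie_algebra N (so_alg N) (adjacent_pos N)"
proof -
  interpret antidiag_form N "\<lambda>_. 1" 1 by (rule antidiag_form_so)
  have "pos_root_index N (form_alg N (\<lambda>_. 1)) a b" if "adjacent_pos N a b" for a b
  proof -
    have "b = Suc a" "Suc a < N" using that by (auto simp: adjacent_pos_def)
    moreover have "a + Suc a \<noteq> N - 1" using assms(1) by presburger
    ultimately show ?thesis using so_pos_root_index by blast
  qed
  then show ?thesis unfolding so_alg_eq_form_alg
    by (rule form_alg_std) (use assms so_odd_decomp so_odd_simple_coweight in blast)+
qed

subsubsection \<open>Type D\<close>

text \<open>Positions of the simple roots of \<open>D\<^sub>n\<close> (\<open>N = 2n\<close>) and of their mirror images: the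
  \<open>\<epsilon>\<^sub>k - \<epsilon>\<^sub>k\<^sub>+\<^sub>1\<close> off the antidiagonal, and \<open>\<epsilon>\<^sub>n\<^sub>-\<^sub>2 + \<epsilon>\<^sub>n\<^sub>-\<^sub>1\<close> at \<open>(n - 2, n)\<close> and \<open>(n - 1, n + 1)\<close>.\<close>
definition typeD_simple_pos :: "nat \<Rightarrow> nat \<Rightarrow> nat \<Rightarrow> bool" where
  "typeD_simple_pos N a b \<longleftrightarrow> (b = Suc a \<and> Suc a < N \<and> a + b \<noteq> N - 1) \<or>
     (a + 2 = N div 2 \<and> b = N div 2) \<or> (Suc a = N div 2 \<and> b = Suc (N div 2))"

lemma so_even_decomp:
  assumes N: "N = 2 * n" and n: "n \<ge> 2" and ab: "pos_root_index N (form_alg N (\<lambda>_. 1)) a b"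
  shows "typeD_simple_pos N a b \<or> (\<exists>c d e f. pos_root_index N (form_alg N (\<lambda>_. 1)) c d \<and>
    typeD_simple_pos N e f \<and> d - c < b - a \<and>
    agree_on_cartan N (form_alg N (\<lambda>_. 1)) (eps_diff a b) (\<lambda>H. eps_diff c d H + eps_diff e f H))"
proof (cases "typeD_simple_pos N a b")
  case False
  have lt: "a < b" "b < N" using ab by (auto simp: pos_root_index_def)
  have anti: "a + b \<noteq> N - 1" using so_pos_root_index_not_antidiag[OF ab] .
  have half: "N div 2 = n" using N by simp
  have b2: "Suc a < b" "\<not> (a + 2 = n \<and> b = n)" "\<not> (Suc a = n \<and> b = Suc n)"
    using False lt anti half unfolding typeD_simple_pos_def by auto
  show ?thesis
  proof (cases "b \<noteq> n \<and> a + b \<noteq> N")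
    case True
    then have "a < b - 1" "a + (b - 1) \<noteq> N - 1" "typeD_simple_pos N (b - 1) b"
      using lt b2 N unfolding typeD_simple_pos_def by auto
    then show ?thesis
      using lt so_pos_root_index[of a "b - 1" N] eps_diff_split[of a b _ "b - 1"]
      by (intro disjI2 exI[of _ a] exI[of _ "b - 1"] exI[of _ "b - 1"] exI[of _ b])
        (auto simp: agree_on_cartan_def)
  next
    case False
    then have bn: "b = n \<or> a + b = N" by auto
    then have "a \<noteq> n - 1" using b2 lt N n by auto
    moreover have "Suc a + b \<noteq> N - 1" using bn b2(2) N n by auto
    ultimately have "Suc a < b" "Suc a + b \<noteq> N - 1" "typeD_simple_pos N a (Suc a)"
      using lt b2 N n unfolding typeD_simple_pos_def by auto
    then show ?thesis
      using lt so_pos_root_index[of "Suc a" b N] eps_diff_split[of a b _ "Suc a"]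
      by (intro disjI2 exI[of _ "Suc a"] exI[of _ b] exI[of _ a] exI[of _ "Suc a"])
        (auto simp: agree_on_cartan_def)
  qed
qed simp

text \<open>As in type C, but the base value \<open>B\<close> is chosen so that both \<open>\<epsilon>\<^sub>n\<^sub>-\<^sub>2 - \<epsilon>\<^sub>n\<^sub>-\<^sub>1\<close> and
  \<open>\<epsilon>\<^sub>n\<^sub>-\<^sub>2 + \<epsilon>\<^sub>n\<^sub>-\<^sub>1\<close> get their prescribed values.\<close>
lemma so_even_simple_coweight:
  assumes N: "N = 2 * n" and n: "n \<ge> 2"
    and inv: "\<And>a b c d. typeD_simple_pos N a b \<Longrightarrow> typeD_simple_pos N c d \<Longrightarrow>
      agree_on_cartan N (form_alg N (\<lambda>_. 1)) (eps_diff a b) (eps_diff c d) \<Longrightarrow> P a b = P c d"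
  shows "\<exists>H \<in> cartan N (form_alg N (\<lambda>_. 1)).
    \<forall>a b. typeD_simple_pos N a b \<longrightarrow> eps_diff a b H = (if P a b then 0 else 1)"
proof -
  interpret antidiag_form N "\<lambda>_. 1" 1 by (rule antidiag_form_so)
  define t where "t k = (if P k (Suc k) then 0 else 1 :: complex)" for k
  define tf where "tf = (if P (n - 2) n then 0 else 1 :: complex)"
  define B where "B = (tf - t (n - 2)) / 2"
  define L where "L = tail_sum n B t"
  define H where "H = mirror_diag N L"
  have half: "N div 2 = n" using N by simp
  have L1: "L (n - 1) = B" by (simp add: L_def tail_sum_def)
  have "Suc (n - 2) < n" using n by simp
  then have "L (n - 2) - L (n - 1) = t (n - 2)"
    using tail_sum_step[of "n - 2" n B t] n unfolding L_def by (simp add: Suc_diff_Suc numeral_2_eq_2)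
  then have L2: "L (n - 2) = B + t (n - 2)" using L1 by (simp add: algebra_simps)
  have regular: "eps_diff a (Suc a) H = t a" if a: "Suc a < N" "a \<noteq> n - 1" for a
  proof (cases "Suc a < n")
    case True
    then show ?thesis
      using tail_sum_step[OF True] half by (simp add: H_def L_def eps_diff_def mirror_diag_entry)
  next
    case False
    then have "n \<le> a" "Suc (N - 2 - a) < n" using a N by auto
    moreover have "Suc (N - 2 - a) = N - 1 - a" using a by simp
    moreover have "typeD_simple_pos N a (Suc a)" "typeD_simple_pos N (N - 2 - a) (N - 1 - a)"
      using a \<open>n \<le> a\<close> N unfolding typeD_simple_pos_def by auto
    ultimately show ?thesis
      using mirror_diag_upper_half[of a P] inv adjacent_flip_agree[OF a(1)]
        tail_sum_step[of "N - 2 - a" n B t] a half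
      by (auto simp: H_def L_def t_def eps_diff_def mirror_diag_entry)
  qed
  have "L (n - 2) + L (n - 1) = 2 * B + t (n - 2)" using L1 L2 by simp
  then have sum_tf: "L (n - 2) + L (n - 1) = tf" by (simp add: B_def field_simps)
  have spin: "eps_diff (n - 2) n H = tf" "eps_diff (n - 1) (Suc n) H = tf"
    using mirror_diag_spin[OF N n] sum_tf by (simp_all add: H_def)
  have "P (n - 1) (Suc n) = P (n - 2) n"
  proof (rule inv)
    show "typeD_simple_pos N (n - 1) (Suc n)" "typeD_simple_pos N (n - 2) n"
      using n half unfolding typeD_simple_pos_def by auto
    have "N - 1 - (n - 2) = Suc n" "N - 1 - (n - 1) = n" using n N by auto
    then show "agree_on_cartan N G (eps_diff (n - 1) (Suc n)) (eps_diff (n - 2) n)"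
      using cartan_flip[of _ "n - 2"] cartan_flip[of _ "n - 1"] n N
      by (auto simp: agree_on_cartan_def eps_diff_def)
  qed
  then have "eps_diff a b H = (if P a b then 0 else 1)" if "typeD_simple_pos N a b" for a b
    using that regular spin N n half
    by (auto simp: typeD_simple_pos_def t_def tf_def numeral_2_eq_2)
  then show ?thesis using mirror_diag_cartan[of L] unfolding H_def by blast
qed

lemma so_even_std:
  assumes "N = 2 * n" "n \<ge> 2"
  shows "std_matrix_lie_algebra N (so_alg N) (typeD_simple_pos N)"
proof -
  interpret antidiag_form N "\<lambda>_. 1" 1 by (rule antidiag_form_so)
  have "pos_root_index N (form_alg N (\<lambda>_. 1)) a b" if "typeD_simple_pos N a b" for a b
    using that assms so_pos_root_index[of a b N] by (auto simp: typeD_simple_pos_def)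
  then show ?thesis unfolding so_alg_eq_form_alg
    by (rule form_alg_std) (use assms so_even_decomp so_even_simple_coweight in blast)+
qed

lemma classical_simple_std:
  assumes "classical_simple N g"
  obtains simple_pos where "std_matrix_lie_algebra N g simple_pos"
proof -
  consider "N \<ge> 2" "g = sl_alg N" | "N = 3 \<or> N \<ge> 5" "g = so_alg N"
    | n where "n \<ge> 1" "N = 2 * n" "g = sp_alg n"
    using assms unfolding classical_simple_def by blast
  then show ?thesis
  proof cases
    case 1
    then show ?thesis using sl_std that by blast
  next
    case 2
    show ?thesis
    proof (cases "even N")
      case True
      then obtain n where "N = 2 * n" by blast
      then show ?thesis using so_even_std[of N n] 2 that by auto
    next
      case False
      then obtain n where "N = 2 * n + 1" using oddE by blast
      then show ?thesis using so_odd_std[of N n] 2 that by auto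
    qed
  next
    case 3
    then show ?thesis using sp_std that by blast
  qed
qed

theorem mainTheorem6:
  fixes N m :: nat
    and g :: "complex mat set"
    and R' :: "(complex mat \<Rightarrow> complex) set"
    and \<rho> :: "nat \<Rightarrow> complex mat \<Rightarrow> complex mat"
    and w :: "complex vec"
    and lam :: "complex mat \<Rightarrow> complex"
  assumes g: "classical_simple N g"
    and R': "closed_root_subset N g R'"
    and simple: "\<And>\<alpha>. simple_roots N g (\<lambda>\<beta>. \<beta> \<in> R' \<and> pos_root N g \<beta>) \<alpha>
                     \<Longrightarrow> simple_roots N g (pos_root N g) \<alpha>"
    and rep: "current_rep N g m \<rho>"
    and w: "w \<in> weight_space N g m \<rho> lam" "w \<noteq> 0\<^sub>v m"
    and cyc: "cyclic_sub m \<rho> (nneg N g) w = carrier_vec m"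
  shows "cyclic_sub m \<rho> (levi N g R') w
           = vec_sum_span m (\<Union>\<mu> \<in> {\<mu>. Qplus N g R' \<mu>}. weight_space N g m \<rho> (\<lambda>H. lam H - \<mu> H))"
proof -
  obtain simple_pos where "std_matrix_lie_algebra N g simple_pos"
    using classical_simple_std[OF g] .
  then have "levi_module N g simple_pos R' m \<rho> w lam"
    using R' simple rep w(1) cyc
    unfolding levi_module_def levi_data_def levi_module_axioms_def levi_data_axioms_def by blast
  then show ?thesis by (rule levi_module.levi_cyclic_eq_weight_sum)
qed

end
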